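(* Let $p\ge1$, let $A_1,\dots,A_p\ge1$ and $n_1,\dots,n_p\ge0$ be integers, and let $P(X_1,\dots,X_p)\in\mathbb{Q}[X_1,\dots,X_p]$. Let $z_1,\dots,z_p$ be complex numbers with $|z_j|>1$ for all $j=1,\dots,p$. Then the series $$S=\sum_{k_1\ge\cdots\ge k_p\ge1}\frac{P(k_1,\dots,k_p)}{(k_1)_{n_1+1}^{A_1}\cdots(k_p)_{n_p+1}^{A_p}}\,z_1^{-k_1}\cdots z_p^{-k_p}$$ can be written as a finite linear combination of multiple polylogarithms $\mathrm{La}_{s_1,\dots,s_q}(1/\widehat z_1,\dots,1/\widehat z_q)$, where $0\le q\le p$, $s_i\ge1$ for $i=1,\dots,q$, $\sum_{j=1}^qs_j\le\sum_{j=1}^pA_j$, and each $\widehat z_i$ is a product of some of $z_1,\dots,z_p$; the coefficients of this combination are polynomials with rational coefficients in the quantities $(1-z_{j_1}\cdots z_{j_m})^{-1}$ ($m\ge1$, $1\le j_1<\cdots<j_m\le p$) and $z_j^{\pm1}$ ($1\le j\le p$).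
   Context: $(\alpha)_m=\alpha(\alpha+1)\cdots(\alpha+m-1)$ is the Pochhammer symbol. For $q\ge1$, integers $s_1,\dots,s_q$ and complex $w_1,\dots,w_q$ with $|w_i|<1$, $\mathrm{La}_{s_1,\dots,s_q}(w_1,\dots,w_q)=\sum_{k_1\ge k_2\ge\cdots\ge k_q\ge1}\frac{w_1^{k_1}\cdots w_q^{k_q}}{k_1^{s_1}\cdots k_q^{s_q}}$. The polylogarithm of depth $q=0$ is the constant $1$. *)

theory Defs
  imports "HOL-Analysis.Analysis"
begin

text \<open>Index tuples are functions nat \<Rightarrow> nat; position j (0-based) stands for index j+1
  of the paper.\<close>
definition chain_idx :: "nat \<Rightarrow> (nat \<Rightarrow> nat) set" where
  "chain_idx q = {k. (\<forall>i. Suc i < q \<longrightarrow> k (Suc i) \<le> k i) \<and> (\<forall>i<q. 1 \<le> k i) \<and> (\<forall>i\<ge>q. k i = 0)}"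

definition La :: "nat \<Rightarrow> (nat \<Rightarrow> int) \<Rightarrow> (nat \<Rightarrow> complex) \<Rightarrow> complex" where
  "La q s w = (\<Sum>\<^sub>\<infinity>k\<in>chain_idx q. \<Prod>i<q. w i ^ k i / (of_nat (k i)) powi (s i))"

text \<open>Evaluation of the polynomial with rational coefficient function c (finite support)
  in the p variables X_1..X_p at the point x: sum over exponent vectors e of
  c e * prod_{j<p} x_j^{e_j}.\<close>
definition poly_eval :: "nat \<Rightarrow> ((nat \<Rightarrow> nat) \<Rightarrow> rat) \<Rightarrow> (nat \<Rightarrow> complex) \<Rightarrow> complex" where
  "poly_eval p c x = (\<Sum>e\<in>{e. c e \<noteq> 0}. of_rat (c e) * (\<Prod>j<p. x j ^ e j))"

inductive_set coeff_alg :: "nat \<Rightarrow> (nat \<Rightarrow> complex) \<Rightarrow> complex set" for p z where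
  rat: "of_rat r \<in> coeff_alg p z"
| var: "j < p \<Longrightarrow> z j \<in> coeff_alg p z"
| inv_var: "j < p \<Longrightarrow> inverse (z j) \<in> coeff_alg p z"
| inv_one_minus: "J \<subseteq> {..<p} \<Longrightarrow> J \<noteq> {} \<Longrightarrow> inverse (1 - (\<Prod>j\<in>J. z j)) \<in> coeff_alg p z"
| add: "a \<in> coeff_alg p z \<Longrightarrow> b \<in> coeff_alg p z \<Longrightarrow> a + b \<in> coeff_alg p z"
| mult: "a \<in> coeff_alg p z \<Longrightarrow> b \<in> coeff_alg p z \<Longrightarrow> a * b \<in> coeff_alg p z"

end

theory Submission
  imports Defs "HOL-Real_Asymp.Real_Asymp"
begin

text \<open>Expanding P and the factors 1 / (k_j)_(n_j+1)^(A_j) into partial fractions writes the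
  series as a combination of chain sums, the sums over k_1 \<ge> ... \<ge> k_d \<ge> 1 of the products of
  u_j^(k_j) h_j(k_j), where u_j = 1 / (product of z_i over i in J_j) for disjoint blocks J_j and
  each h_j is a monomial K^e or a partial fraction 1 / (K + i)^a, the pole orders adding up to at
  most the sum of the A_j. If every h_j is 1 / K^a, the chain sum is a multiple polylogarithm.
  Otherwise sum first over the index k_m of an offending slot, which runs between its two
  neighbours. A tail of u^x x^e from x = L on equals u^L Q(L) with Q a polynomial over the
  coefficient algebra (this is where the factors (1 - u)^(-1) come from), and a tail of
  u^x / (x + i)^a is u^(-i) times a tail of u^x / x^a up to i boundary terms. Each boundary term
  is absorbed by a neighbouring slot, uniting the two blocks and multiplying the two slot
  functions; this lowers the depth, and by partial fractions again it keeps the total pole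
  order. Induction on the depth and on the number of offending slots concludes.\<close>

section \<open>The coefficient algebra\<close>

lemma coeff_alg_0: "0 \<in> coeff_alg p z"
  using coeff_alg.rat[of 0] by simp

lemma coeff_alg_1: "1 \<in> coeff_alg p z"
  using coeff_alg.rat[of 1] by simp

lemma coeff_alg_of_nat: "of_nat n \<in> coeff_alg p z"
  using coeff_alg.rat[of "of_nat n"] by simp

lemma coeff_alg_neg: "a \<in> coeff_alg p z \<Longrightarrow> - a \<in> coeff_alg p z"
  using coeff_alg.mult[OF coeff_alg.rat[of "-1"]] by simp

lemma coeff_alg_power: "a \<in> coeff_alg p z \<Longrightarrow> a ^ n \<in> coeff_alg p z"
  by (induction n) (auto intro: coeff_alg_1 coeff_alg.mult)

lemma coeff_alg_prod: "(\<And>i. i \<in> I \<Longrightarrow> f i \<in> coeff_alg p z) \<Longrightarrow> prod f I \<in> coeff_alg p z"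
  by (induction I rule: infinite_finite_induct) (auto intro: coeff_alg_1 coeff_alg.mult)

definition inv_zprod :: "(nat \<Rightarrow> complex) \<Rightarrow> nat set \<Rightarrow> complex" where
  "inv_zprod z J = 1 / (\<Prod>j\<in>J. z j)"

lemma inv_zprod_Un:
  "finite A \<Longrightarrow> finite B \<Longrightarrow> A \<inter> B = {} \<Longrightarrow> inv_zprod z (A \<union> B) = inv_zprod z A * inv_zprod z B"
  unfolding inv_zprod_def by (simp add: prod.union_disjoint)

lemma inv_zprod_in_coeff_alg: "J \<subseteq> {..<p} \<Longrightarrow> inv_zprod z J \<in> coeff_alg p z"
  unfolding inv_zprod_def
  by (auto simp: prod_inversef[symmetric] divide_inverse intro!: coeff_alg_prod coeff_alg.inv_var)

lemma inverse_inv_zprod_in_coeff_alg: "J \<subseteq> {..<p} \<Longrightarrow> inverse (inv_zprod z J) \<in> coeff_alg p z"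
  unfolding inv_zprod_def by (auto intro!: coeff_alg_prod coeff_alg.var)

lemma inverse_one_minus_inv_zprod_in_coeff_alg:
  assumes "J \<subseteq> {..<p}" "J \<noteq> {}" "(\<Prod>j\<in>J. z j) \<noteq> 0"
  shows "inverse (1 - inv_zprod z J) \<in> coeff_alg p z"
proof -
  define P where "P = (\<Prod>j\<in>J. z j)"
  have "inverse (1 - inv_zprod z J) = - P * inverse (1 - P)"
    using assms(3) unfolding inv_zprod_def P_def[symmetric]
    by (cases "P = 1") (auto simp: field_simps)
  also have "\<dots> \<in> coeff_alg p z"
    using assms unfolding P_def
    by (intro coeff_alg.mult coeff_alg_neg coeff_alg_prod coeff_alg.inv_one_minus) (auto intro: coeff_alg.var)
  finally show ?thesis .
qed

lemma norm_prod_gt_1: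
  fixes f :: "'i \<Rightarrow> 'a :: real_normed_field"
  assumes "finite J" "J \<noteq> {}" "\<And>j. j \<in> J \<Longrightarrow> norm (f j) > 1"
  shows "norm (\<Prod>j\<in>J. f j) > 1"
  using assms
proof (induction J rule: finite_ne_induct)
  case (insert x F)
  then show ?case by (simp add: norm_mult less_1_mult)
qed simp

lemma norm_inv_zprod_less_1:
  assumes "J \<subseteq> {..<p}" "J \<noteq> {}" "\<forall>j<p. norm (z j) > 1"
  shows "norm (inv_zprod z J) < 1"
proof -
  have "norm (\<Prod>j\<in>J. z j) > 1"
    using assms finite_subset[OF assms(1)] by (intro norm_prod_gt_1) auto
  then show ?thesis unfolding inv_zprod_def by (simp add: norm_divide divide_less_eq)
qed

section \<open>Rational functions of the summation index\<close>

definition pfrac :: "nat \<Rightarrow> nat \<Rightarrow> nat \<Rightarrow> complex" where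
  "pfrac i a K = 1 / (of_nat K + of_nat i) ^ a"

text \<open>Only values at K \<ge> 1 matter (rule cong): they form the range of every chain index.\<close>
inductive_set ratfuns :: "nat \<Rightarrow> (nat \<Rightarrow> complex) \<Rightarrow> (nat \<times> nat) set \<Rightarrow> (nat \<Rightarrow> complex) set"
  for p z S where
  monom: "(\<lambda>K. of_nat K ^ e) \<in> ratfuns p z S"
| pfrac: "(i, a) \<in> S \<Longrightarrow> pfrac i a \<in> ratfuns p z S"
| add: "f \<in> ratfuns p z S \<Longrightarrow> g \<in> ratfuns p z S \<Longrightarrow> (\<lambda>K. f K + g K) \<in> ratfuns p z S"
| smult: "r \<in> coeff_alg p z \<Longrightarrow> f \<in> ratfuns p z S \<Longrightarrow> (\<lambda>K. r * f K) \<in> ratfuns p z S"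
| cong: "f \<in> ratfuns p z S \<Longrightarrow> \<forall>K\<ge>1. g K = f K \<Longrightarrow> g \<in> ratfuns p z S"

abbreviation ratfuns_upto :: "nat \<Rightarrow> (nat \<Rightarrow> complex) \<Rightarrow> nat \<Rightarrow> (nat \<Rightarrow> complex) set" where
  "ratfuns_upto p z w \<equiv> ratfuns p z {(i, a). a \<le> w}"

lemma ratfuns_mono: "f \<in> ratfuns p z S \<Longrightarrow> S \<subseteq> S' \<Longrightarrow> f \<in> ratfuns p z S'"
  by (induction rule: ratfuns.induct) (auto intro: ratfuns.intros)

lemma ratfuns_upto_mono: "f \<in> ratfuns_upto p z w \<Longrightarrow> w \<le> w' \<Longrightarrow> f \<in> ratfuns_upto p z w'"
  by (erule ratfuns_mono) auto

lemma ratfuns_const: "r \<in> coeff_alg p z \<Longrightarrow> (\<lambda>_. r) \<in> ratfuns p z S"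
  using ratfuns.smult[OF _ ratfuns.monom[of 0]] by simp

lemma ratfuns_zero: "(\<lambda>_. 0) \<in> ratfuns p z S"
  by (rule ratfuns_const[OF coeff_alg_0])

lemma ratfuns_neg: "f \<in> ratfuns p z S \<Longrightarrow> (\<lambda>K. - f K) \<in> ratfuns p z S"
  using ratfuns.smult[OF coeff_alg_neg[OF coeff_alg_1]] by simp

lemma ratfuns_diff:
  "f \<in> ratfuns p z S \<Longrightarrow> g \<in> ratfuns p z S \<Longrightarrow> (\<lambda>K. f K - g K) \<in> ratfuns p z S"
  using ratfuns.add[OF _ ratfuns_neg] by simp

lemma ratfuns_sum:
  "(\<And>i. i \<in> I \<Longrightarrow> f i \<in> ratfuns p z S) \<Longrightarrow> (\<lambda>K. \<Sum>i\<in>I. f i K) \<in> ratfuns p z S"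
  by (induction I rule: infinite_finite_induct) (auto intro: ratfuns_zero ratfuns.add)

lemma ratfuns_in_coeff_alg: "f \<in> ratfuns p z S \<Longrightarrow> K \<ge> 1 \<Longrightarrow> f K \<in> coeff_alg p z"
proof (induction arbitrary: K rule: ratfuns.induct)
  case (pfrac i a)
  have "pfrac i a K = of_rat (1 / (of_nat K + of_nat i) ^ a)"
    by (simp add: pfrac_def of_rat_divide of_rat_power of_rat_add)
  then show ?case by (simp add: coeff_alg.rat)
qed (auto intro: coeff_alg_power coeff_alg_of_nat coeff_alg.add coeff_alg.mult)

lemma pfrac_0 [simp]: "pfrac i 0 K = 1"
  by (simp add: pfrac_def)

lemma of_nat_add_neq_0: "K \<ge> 1 \<Longrightarrow> (of_nat K + of_nat i :: complex) \<noteq> 0"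
  by (metis add_is_0 not_one_le_zero of_nat_add of_nat_eq_0_iff)

text \<open>Writing K = (K + i) - i lowers both the degree and the pole order.\<close>
lemma monom_mult_pfrac_in_ratfuns:
  assumes "\<forall>a'\<le>a. (i, a') \<in> S"
  shows "(\<lambda>K. of_nat K ^ e * pfrac i a K) \<in> ratfuns p z S"
  using assms
proof (induction e arbitrary: a)
  case 0
  then show ?case using ratfuns.pfrac[of i a S] by simp
next
  case (Suc e)
  show ?case
  proof (cases a)
    case 0
    then show ?thesis using ratfuns.monom[of "Suc e"] by (simp add: pfrac_def)
  next
    case (Suc a')
    have "(\<lambda>K. of_nat K ^ e * pfrac i a' K - of_nat i * (of_nat K ^ e * pfrac i a K)) \<in> ratfuns p z S"
      using Suc.prems Suc
      by (intro ratfuns_diff ratfuns.smult[OF coeff_alg_of_nat] Suc.IH) auto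
    then show ?thesis
    proof (rule ratfuns.cong, intro allI impI)
      fix K :: nat assume "K \<ge> 1"
      define x where "x = (of_nat K + of_nat i :: complex)"
      have "x \<noteq> 0" using \<open>K \<ge> 1\<close> unfolding x_def by (rule of_nat_add_neq_0)
      moreover have K: "of_nat K = x - of_nat i" unfolding x_def by simp
      ultimately show "of_nat K ^ Suc e * pfrac i a K
          = of_nat K ^ e * pfrac i a' K - of_nat i * (of_nat K ^ e * pfrac i a K)"
        unfolding pfrac_def Suc x_def[symmetric] K by (simp add: field_simps)
    qed
  qed
qed

lemma pfrac_mult_pfrac_same: "pfrac i a K * pfrac i b K = pfrac i (a + b) K"
  by (simp add: pfrac_def power_add)

text \<open>Induction on a + b, using 1 / ((K + i) (K + j)) = (1 / (K + i) - 1 / (K + j)) / (j - i).\<close>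
lemma pfrac_mult_pfrac_in_ratfuns:
  assumes "i \<noteq> j" "\<forall>a'\<le>a. (i, a') \<in> S" "\<forall>b'\<le>b. (j, b') \<in> S"
  shows "(\<lambda>K. pfrac i a K * pfrac j b K) \<in> ratfuns p z S"
  using assms(2,3)
proof (induction "a + b" arbitrary: a b rule: less_induct)
  case less
  show ?case
  proof (cases "a = 0 \<or> b = 0")
    case True
    then show ?thesis
      using less.prems ratfuns.pfrac[of i a S] ratfuns.pfrac[of j b S] by auto
  next
    case False
    then obtain a' b' where a: "a = Suc a'" and b: "b = Suc b'" by (meson not0_implies_Suc)
    define c :: complex where "c = 1 / (of_nat j - of_nat i)"
    have "c \<in> coeff_alg p z"
      using coeff_alg.rat[of "1 / (of_nat j - of_nat i)"] by (simp add: c_def of_rat_divide of_rat_diff)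
    then have "(\<lambda>K. c * (pfrac i a K * pfrac j b' K - pfrac i a' K * pfrac j b K)) \<in> ratfuns p z S"
      using less.prems a b by (intro ratfuns.smult ratfuns_diff less.hyps) auto
    then show ?thesis
    proof (rule ratfuns.cong, intro allI impI)
      fix K :: nat assume "K \<ge> 1"
      define x where "x = (of_nat K + of_nat i :: complex)"
      define y where "y = (of_nat K + of_nat j :: complex)"
      have ji: "(of_nat j - of_nat i :: complex) = y - x" unfolding x_def y_def by simp
      have "x \<noteq> 0" "y \<noteq> 0" "y - x \<noteq> 0"
        using of_nat_add_neq_0[OF \<open>K \<ge> 1\<close>] assms(1) ji unfolding x_def y_def by auto
      then show "pfrac i a K * pfrac j b K
          = c * (pfrac i a K * pfrac j b' K - pfrac i a' K * pfrac j b K)"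
        unfolding pfrac_def c_def a b x_def[symmetric] y_def[symmetric] ji by (simp add: field_simps)
    qed
  qed
qed

lemma ratfuns_mult_left:
  assumes "f \<in> ratfuns p z S1"
    and "\<And>e. (\<lambda>K. \<phi> K * of_nat K ^ e) \<in> ratfuns p z S"
    and "\<And>i a. (i, a) \<in> S1 \<Longrightarrow> (\<lambda>K. \<phi> K * pfrac i a K) \<in> ratfuns p z S"
  shows "(\<lambda>K. \<phi> K * f K) \<in> ratfuns p z S"
  using assms(1)
proof (induction rule: ratfuns.induct)
  case (add f g)
  then show ?case using ratfuns.add[OF add.IH] by (simp add: distrib_left)
next
  case (smult r f)
  then show ?case using ratfuns.smult[OF smult.hyps(1) smult.IH] by (simp add: mult.left_commute)
next
  case (cong f g)
  then show ?case by (intro ratfuns.cong[OF cong.IH]) auto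
qed (use assms in auto)

lemma ratfuns_mult:
  assumes "f \<in> ratfuns p z S1" "g \<in> ratfuns p z S2"
    and S1: "\<And>i a a'. (i, a) \<in> S1 \<Longrightarrow> a' \<le> a \<Longrightarrow> (i, a') \<in> S"
    and S2: "\<And>j b b'. (j, b) \<in> S2 \<Longrightarrow> b' \<le> b \<Longrightarrow> (j, b') \<in> S"
    and S12: "\<And>i a b. (i, a) \<in> S1 \<Longrightarrow> (i, b) \<in> S2 \<Longrightarrow> (i, a + b) \<in> S"
  shows "(\<lambda>K. f K * g K) \<in> ratfuns p z S"
proof -
  have monom_g: "(\<lambda>K. of_nat K ^ e * g K) \<in> ratfuns p z S" for e
    using assms(2)
  proof (rule ratfuns_mult_left)
    show "(\<lambda>K. of_nat K ^ e * of_nat K ^ e') \<in> ratfuns p z S" for e'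
      using ratfuns.monom[of "e + e'"] by (simp add: power_add)
    show "(\<lambda>K. of_nat K ^ e * pfrac j b K) \<in> ratfuns p z S" if "(j, b) \<in> S2" for j b
      using that S2 by (intro monom_mult_pfrac_in_ratfuns) auto
  qed
  have pfrac_g: "(\<lambda>K. pfrac i a K * g K) \<in> ratfuns p z S" if ia: "(i, a) \<in> S1" for i a
    using assms(2)
  proof (rule ratfuns_mult_left)
    show "(\<lambda>K. pfrac i a K * of_nat K ^ e) \<in> ratfuns p z S" for e
      using monom_mult_pfrac_in_ratfuns[of a i S e] ia S1 by (simp add: mult.commute)
    show "(\<lambda>K. pfrac i a K * pfrac j b K) \<in> ratfuns p z S" if jb: "(j, b) \<in> S2" for j b
    proof (cases "i = j")
      case True
      then show ?thesis using ratfuns.pfrac[OF S12[OF ia]] jb by (simp add: pfrac_mult_pfrac_same)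
    next
      case False
      then show ?thesis using ia jb S1 S2 by (intro pfrac_mult_pfrac_in_ratfuns) auto
    qed
  qed
  have "(\<lambda>K. g K * f K) \<in> ratfuns p z S"
    using assms(1)
  proof (rule ratfuns_mult_left)
    show "(\<lambda>K. g K * of_nat K ^ e) \<in> ratfuns p z S" for e
      using monom_g[of e] by (simp add: mult.commute)
    show "(\<lambda>K. g K * pfrac i a K) \<in> ratfuns p z S" if "(i, a) \<in> S1" for i a
      using pfrac_g[OF that] by (simp add: mult.commute)
  qed
  then show ?thesis by (simp add: mult.commute)
qed

lemma ratfuns_upto_mult:
  "f \<in> ratfuns_upto p z w1 \<Longrightarrow> g \<in> ratfuns_upto p z w2 \<Longrightarrow> (\<lambda>K. f K * g K) \<in> ratfuns_upto p z (w1 + w2)"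
  by (erule ratfuns_mult) auto

text \<open>The factors 1 / (K + i)^A have pairwise distinct poles, so their product has pole order
  A and not (n + 1) A.\<close>
lemma monom_div_pochhammer_in_ratfuns:
  "(\<lambda>K. of_nat K ^ e / pochhammer (of_nat K) (Suc n) ^ A) \<in> ratfuns_upto p z A"
proof -
  have prod: "(\<lambda>K. \<Prod>i\<in>I. pfrac i A K) \<in> ratfuns p z (I \<times> {..A})" if "finite I" for I
    using that
  proof (induction I rule: finite_induct)
    case empty
    then show ?case using ratfuns.monom[of 0] by simp
  next
    case (insert j I)
    have "(\<lambda>K. (\<Prod>i\<in>I. pfrac i A K) * pfrac j A K) \<in> ratfuns p z (insert j I \<times> {..A})"
      by (rule ratfuns_mult[OF insert.IH ratfuns.pfrac[of j A "{(j, A)}"]]) (use insert.hyps in auto)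
    then show ?case using insert.hyps by (simp add: mult.commute)
  qed
  have "(\<lambda>K. of_nat K ^ e * (\<Prod>i<Suc n. pfrac i A K)) \<in> ratfuns_upto p z (0 + A)"
    by (intro ratfuns_upto_mult ratfuns.monom ratfuns_mono[OF prod]) auto
  moreover have "of_nat K ^ e * (\<Prod>i<Suc n. pfrac i A K) = of_nat K ^ e / pochhammer (of_nat K) (Suc n) ^ A" for K
    by (simp add: pfrac_def pochhammer_prod prod_dividef power_one_over divide_inverse
        prod_power_distrib[symmetric] atLeast0LessThan flip: power_inverse prod_inversef)
  ultimately show ?thesis by simp
qed

section \<open>Chain sums\<close>

definition poly_bounded :: "(nat \<Rightarrow> 'a :: real_normed_vector) \<Rightarrow> bool" where
  "poly_bounded h \<longleftrightarrow> (\<exists>C E. \<forall>K\<ge>1. norm (h K) \<le> C * real K ^ E)"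

lemma poly_bounded_add:
  assumes "poly_bounded f" "poly_bounded g"
  shows "poly_bounded (\<lambda>K. f K + g K)"
proof -
  obtain C1 E1 C2 E2 where f: "\<forall>K\<ge>1. norm (f K) \<le> C1 * real K ^ E1"
    and g: "\<forall>K\<ge>1. norm (g K) \<le> C2 * real K ^ E2"
    using assms unfolding poly_bounded_def by blast
  have "norm (f K + g K) \<le> (\<bar>C1\<bar> + \<bar>C2\<bar>) * real K ^ (E1 + E2)" if "K \<ge> 1" for K
  proof -
    have "C1 * real K ^ E1 \<le> \<bar>C1\<bar> * real K ^ (E1 + E2)" "C2 * real K ^ E2 \<le> \<bar>C2\<bar> * real K ^ (E1 + E2)"
      using that by (intro mult_mono power_increasing; simp)+
    moreover have "norm (f K) \<le> C1 * real K ^ E1" "norm (g K) \<le> C2 * real K ^ E2"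
      using f g that by auto
    ultimately show ?thesis
      using norm_triangle_ineq[of "f K" "g K"] by (simp add: distrib_right)
  qed
  then show ?thesis unfolding poly_bounded_def by blast
qed

lemma poly_bounded_cmult:
  "poly_bounded f \<Longrightarrow> poly_bounded (\<lambda>K. r * f K :: complex)"
proof -
  assume "poly_bounded f"
  then obtain C E where "\<forall>K\<ge>1. norm (f K) \<le> C * real K ^ E"
    unfolding poly_bounded_def by blast
  then have "\<forall>K\<ge>1. norm (r * f K) \<le> (norm r * C) * real K ^ E"
    by (simp add: norm_mult mult.assoc mult_left_mono)
  then show ?thesis unfolding poly_bounded_def by blast
qed

lemma ratfuns_poly_bounded: "f \<in> ratfuns p z S \<Longrightarrow> poly_bounded f"
proof (induction rule: ratfuns.induct)
  case (monom e)
  show ?case unfolding poly_bounded_def by (intro exI[of _ 1] exI[of _ e]) (simp add: norm_power)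
next
  case (pfrac i a)
  have "norm (pfrac i a K) \<le> 1 * real K ^ 0" if "K \<ge> 1" for K
  proof -
    have "norm (of_nat K + of_nat i :: complex) \<ge> 1"
      using that by (metis norm_of_nat of_nat_add of_nat_1 of_nat_mono trans_le_add1)
    then have "norm ((of_nat K + of_nat i :: complex) ^ a) \<ge> 1"
      by (simp add: norm_power one_le_power)
    then show ?thesis by (simp add: pfrac_def norm_divide divide_le_eq)
  qed
  then show ?case unfolding poly_bounded_def by blast
next
  case (cong f g)
  then show ?case unfolding poly_bounded_def by (metis (no_types, lifting))
qed (auto intro: poly_bounded_add poly_bounded_cmult)

lemma poly_bounded_monom: "poly_bounded (\<lambda>K. of_nat K ^ e :: complex)"
  using ratfuns_poly_bounded[OF ratfuns.monom[of e 0 "\<lambda>_. 0" "{}"]] .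

lemma poly_bounded_pfrac: "poly_bounded (pfrac i a)"
  using ratfuns_poly_bounded[OF ratfuns.pfrac[of i a "{(i, a)}" 0 "\<lambda>_. 0"]] by simp

lemma summable_real_power_mult_geometric:
  assumes "0 \<le> q" "q < (1::real)"
  shows "summable (\<lambda>n. real n ^ E * q ^ n)"
proof (cases "q = 0")
  case True
  have "summable (\<lambda>n. if n = 0 then real n ^ E * q ^ n else 0)" by simp
  moreover have "(\<lambda>n. if n = 0 then real n ^ E * q ^ n else 0) = (\<lambda>n. real n ^ E * q ^ n)"
    using True by (auto simp: fun_eq_iff)
  ultimately show ?thesis by simp
next
  case False
  then have q: "0 < q" using assms by simp
  define r where "r = sqrt q"
  have "sqrt q < sqrt 1" using assms by (subst real_sqrt_less_iff) simp
  then have r: "0 < r" "r < 1" using q unfolding r_def by auto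
  have "(\<lambda>n. real n ^ E * r ^ n) \<longlonglongrightarrow> 0" using r by real_asymp
  then have "eventually (\<lambda>n. real n ^ E * r ^ n < 1) sequentially"
    by (rule order_tendstoD) simp
  then have ev: "eventually (\<lambda>n. norm (real n ^ E * q ^ n) \<le> r ^ n) sequentially"
  proof eventually_elim
    case (elim n)
    have "q ^ n = r ^ n * r ^ n" unfolding r_def using q
      by (simp add: power_mult_distrib[symmetric])
    then have "real n ^ E * q ^ n = (real n ^ E * r ^ n) * r ^ n" by simp
    also have "\<dots> \<le> 1 * r ^ n" using elim r by (intro mult_right_mono) auto
    finally show ?case using q by simp
  qed
  show ?thesis
    by (rule summable_comparison_test_ev[OF ev]) (use r in \<open>simp add: summable_geometric\<close>)
qed

lemma abs_summable_on_power_mult: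
  fixes u :: complex
  assumes "norm u < 1" "poly_bounded h"
  shows "(\<lambda>K. norm (u ^ K * h K)) summable_on UNIV"
proof -
  obtain C E where CE: "\<forall>K\<ge>1. norm (h K) \<le> C * real K ^ E"
    using assms(2) unfolding poly_bounded_def by blast
  have "summable (\<lambda>K. real K ^ E * norm u ^ K)"
    using assms(1) by (intro summable_real_power_mult_geometric) auto
  then have "(\<lambda>K. real K ^ E * norm u ^ K) summable_on UNIV"
    by (subst summable_on_UNIV_nonneg_real_iff) auto
  then have "(\<lambda>K. real K ^ E * norm u ^ K) summable_on {1..}"
    by (rule summable_on_subset) auto
  then have "(\<lambda>K. \<bar>C\<bar> * (real K ^ E * norm u ^ K)) summable_on {1..}"
    by (rule summable_on_cmult_right)
  then have "(\<lambda>K. norm (u ^ K * h K)) summable_on {1..}"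
  proof (rule Infinite_Sum.abs_summable_on_comparison_test')
    fix K :: nat assume "K \<in> {1..}"
    then have "norm (h K) \<le> \<bar>C\<bar> * real K ^ E"
      using CE by (auto intro: order_trans[OF _ mult_right_mono[OF abs_ge_self]])
    then have "norm u ^ K * norm (h K) \<le> norm u ^ K * (\<bar>C\<bar> * real K ^ E)"
      by (rule mult_left_mono) simp
    then show "norm (u ^ K * h K) \<le> \<bar>C\<bar> * (real K ^ E * norm u ^ K)"
      by (simp add: norm_mult norm_power mult_ac)
  qed
  then have "(\<lambda>K. norm (u ^ K * h K)) summable_on insert 0 {1..}"
    by (simp only: summable_on_insert_iff)
  moreover have "insert 0 {1::nat..} = UNIV" by auto
  ultimately show ?thesis by simp
qed

lemma summable_on_power_mult:
  fixes u :: complex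
  assumes "norm u < 1" "poly_bounded h"
  shows "(\<lambda>K. u ^ K * h K) summable_on A"
  using abs_summable_summable[OF abs_summable_on_power_mult[OF assms]]
  by (rule summable_on_subset_banach) simp

lemma bij_betw_fun_upd_vanishing_from:
  "bij_betw (\<lambda>(k, x). k(d := x)) ({k. \<forall>j\<ge>d. k j = 0} \<times> UNIV) {k :: nat \<Rightarrow> nat. \<forall>j\<ge>Suc d. k j = 0}"
  by (rule bij_betw_byWitness[where f' = "\<lambda>k. (k(d := 0), k d)"]) (auto simp: fun_eq_iff)

lemma summable_on_prod_vanishing_from:
  fixes g :: "nat \<Rightarrow> nat \<Rightarrow> real"
  assumes "\<And>j. j < d \<Longrightarrow> g j summable_on UNIV" "\<And>j K. g j K \<ge> 0"
  shows "(\<lambda>k. \<Prod>j<d. g j (k j)) summable_on {k. \<forall>j\<ge>d. k j = 0}"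
  using assms(1)
proof (induction d)
  case 0
  have "{k :: nat \<Rightarrow> nat. \<forall>j\<ge>0. k j = 0} = {\<lambda>_. 0}" by (auto simp: fun_eq_iff)
  then show ?case by simp
next
  case (Suc d)
  have "(\<lambda>(k, x). (\<Prod>j<d. g j (k j)) * g d x) summable_on {k. \<forall>j\<ge>d. k j = 0} \<times> UNIV"
  proof (rule summable_on_SigmaI[where g = "\<lambda>k. (\<Prod>j<d. g j (k j)) * infsum (g d) UNIV"])
    show "((\<lambda>x. case (k, x) of (k, x) \<Rightarrow> (\<Prod>j<d. g j (k j)) * g d x) has_sum
          (\<Prod>j<d. g j (k j)) * infsum (g d) UNIV) UNIV" for k
      using Suc.prems by (simp add: has_sum_cmult_right)
    show "(\<lambda>k. (\<Prod>j<d. g j (k j)) * infsum (g d) UNIV) summable_on {k. \<forall>j\<ge>d. k j = 0}"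
      using Suc by (intro summable_on_cmult_left) auto
  qed (auto intro!: mult_nonneg_nonneg prod_nonneg assms(2))
  moreover have "(\<Prod>j<Suc d. g j ((k(d := x)) j)) = (\<Prod>j<d. g j (k j)) * g d x" for k x
    by (simp add: lessThan_Suc)
  ultimately show ?case
    using summable_on_reindex_bij_betw[OF bij_betw_fun_upd_vanishing_from[of d], of "\<lambda>k. \<Prod>j<Suc d. g j (k j)"]
    by (simp add: case_prod_unfold)
qed

definition chain_term ::
  "(nat \<Rightarrow> complex) \<Rightarrow> nat \<Rightarrow> (nat \<Rightarrow> nat set) \<Rightarrow> (nat \<Rightarrow> nat \<Rightarrow> complex) \<Rightarrow> (nat \<Rightarrow> nat) \<Rightarrow> complex"
  where "chain_term z d J h k = (\<Prod>j<d. inv_zprod z (J j) ^ k j * h j (k j))"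

text \<open>For h j K = 1 / K ^ s j this is La d s (\<lambda>j. inv_zprod z (J j)); the series of the
  theorem is a combination of chain sums with J j = {j}.\<close>
definition chain_sum ::
  "(nat \<Rightarrow> complex) \<Rightarrow> nat \<Rightarrow> (nat \<Rightarrow> nat set) \<Rightarrow> (nat \<Rightarrow> nat \<Rightarrow> complex) \<Rightarrow> complex"
  where "chain_sum z d J h = (\<Sum>\<^sub>\<infinity>k\<in>chain_idx d. chain_term z d J h k)"

lemma summable_on_chain_term:
  assumes "\<forall>j<d. norm (inv_zprod z (J j)) < 1" "\<forall>j<d. poly_bounded (h j)"
  shows "chain_term z d J h summable_on chain_idx d"
proof -
  define g where "g j K = norm (inv_zprod z (J j) ^ K * h j K)" for j K
  have "(\<lambda>k. \<Prod>j<d. g j (k j)) summable_on {k. \<forall>j\<ge>d. k j = 0}"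
    using assms abs_summable_on_power_mult unfolding g_def
    by (intro summable_on_prod_vanishing_from) auto
  then have "(\<lambda>k. norm (chain_term z d J h k)) summable_on {k. \<forall>j\<ge>d. k j = 0}"
    by (simp add: chain_term_def prod_norm g_def)
  then have "chain_term z d J h summable_on {k. \<forall>j\<ge>d. k j = 0}"
    by (rule abs_summable_summable)
  then show ?thesis by (rule summable_on_subset_banach) (auto simp: chain_idx_def)
qed

definition skip_idx :: "nat \<Rightarrow> nat \<Rightarrow> nat" where
  "skip_idx m j = (if j < m then j else Suc j)"

lemma (in comm_monoid_set) lessThan_Suc_skip_idx:
  assumes "m \<le> d"
  shows "F g {..<Suc d} = g m \<^bold>* F (g \<circ> skip_idx m) {..<d}"
proof -
  have "inj_on (skip_idx m) {..<d}" by (auto simp: inj_on_def skip_idx_def split: if_splits)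
  moreover have "{..<Suc d} = insert m (skip_idx m ` {..<d})"
  proof (intro equalityI subsetI)
    fix j assume "j \<in> {..<Suc d}"
    then show "j \<in> insert m (skip_idx m ` {..<d})"
      using assms by (cases "j < m"; cases "j = m")
        (auto simp: skip_idx_def image_iff intro: bexI[of _ j] bexI[of _ "j - 1"])
  qed (use assms in \<open>auto simp: skip_idx_def\<close>)
  moreover have "m \<notin> skip_idx m ` {..<d}" by (auto simp: skip_idx_def)
  ultimately show ?thesis by (simp add: reindex)
qed

definition insert_at :: "nat \<Rightarrow> nat \<Rightarrow> (nat \<Rightarrow> nat) \<Rightarrow> nat \<Rightarrow> nat" where
  "insert_at m x k i = (if i < m then k i else if i = m then x else k (i - 1))"

definition insert_min :: "nat \<Rightarrow> nat \<Rightarrow> (nat \<Rightarrow> nat) \<Rightarrow> nat" where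
  "insert_min d m k = (if m < d then k m else 1)"

definition insert_range :: "nat \<Rightarrow> nat \<Rightarrow> (nat \<Rightarrow> nat) \<Rightarrow> nat set" where
  "insert_range d m k = {x. insert_min d m k \<le> x \<and> (0 < m \<longrightarrow> x \<le> k (m - 1))}"

lemma chain_idx_antimono:
  assumes "k \<in> chain_idx d" "i \<le> j" "j < d"
  shows "k j \<le> k i"
  using assms(2,3)
proof (induction j rule: dec_induct)
  case (step j)
  then show ?case using assms(1) by (auto simp: chain_idx_def intro: order.trans)
qed simp

lemma insert_min_ge_1: "k \<in> chain_idx d \<Longrightarrow> insert_min d m k \<ge> 1"
  by (auto simp: insert_min_def chain_idx_def)

lemma insert_at_in_chain_idx:
  assumes "m \<le> d" "k \<in> chain_idx d" "x \<in> insert_range d m k"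
  shows "insert_at m x k \<in> chain_idx (Suc d)"
proof -
  have k: "\<And>i. Suc i < d \<Longrightarrow> k (Suc i) \<le> k i" "\<And>i. i < d \<Longrightarrow> 1 \<le> k i" "\<And>i. i \<ge> d \<Longrightarrow> k i = 0"
    using assms(2) by (auto simp: chain_idx_def)
  have x: "1 \<le> x" "m < d \<Longrightarrow> k m \<le> x" "0 < m \<Longrightarrow> x \<le> k (m - 1)"
    using assms(3) insert_min_ge_1[OF assms(2), of m] by (auto simp: insert_range_def insert_min_def)
  have "insert_at m x k (Suc i) \<le> insert_at m x k i" if "Suc i < Suc d" for i
  proof -
    consider "Suc i < m" | "Suc i = m" | "i = m" | "i > m" by linarith
    then show ?thesis
    proof cases
      case 2
      then have "m - 1 = i" by simp
      then show ?thesis using x(3) 2 by (simp add: insert_at_def)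
    next
      case 4
      then show ?thesis using k(1)[of "i - 1"] that by (simp add: insert_at_def)
    qed (use k(1) x(2) that assms(1) in \<open>auto simp: insert_at_def\<close>)
  qed
  moreover have "1 \<le> insert_at m x k i" if "i < Suc d" for i
    using k(2) x(1) that assms(1) by (auto simp: insert_at_def)
  moreover have "insert_at m x k i = 0" if "i \<ge> Suc d" for i
    using k(3) that assms(1) by (auto simp: insert_at_def)
  ultimately show ?thesis by (auto simp: chain_idx_def)
qed

lemma skip_in_chain_idx:
  assumes "m \<le> d" "k \<in> chain_idx (Suc d)"
  shows "k \<circ> skip_idx m \<in> chain_idx d" "k m \<in> insert_range d m (k \<circ> skip_idx m)"
proof -
  have k: "\<And>i. Suc i < Suc d \<Longrightarrow> k (Suc i) \<le> k i" "\<And>i. i < Suc d \<Longrightarrow> 1 \<le> k i"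
    "\<And>i. i \<ge> Suc d \<Longrightarrow> k i = 0"
    using assms(2) by (auto simp: chain_idx_def)
  have "k (skip_idx m (Suc i)) \<le> k (skip_idx m i)" if "Suc i < d" for i
  proof (cases "Suc i = m")
    case True
    then show ?thesis
      using chain_idx_antimono[OF assms(2), of i "Suc (Suc i)"] that by (simp add: skip_idx_def)
  qed (use k(1) that in \<open>auto simp: skip_idx_def\<close>)
  then show "k \<circ> skip_idx m \<in> chain_idx d"
    using k(2,3) assms(1) by (auto simp: chain_idx_def skip_idx_def)
  show "k m \<in> insert_range d m (k \<circ> skip_idx m)"
    using k(1)[of m] k(1)[of "m - 1"] k(2)[of m] assms(1)
    by (auto simp: insert_range_def insert_min_def skip_idx_def)
qed

lemma bij_betw_insert_at:
  assumes "m \<le> d"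
  shows "bij_betw (\<lambda>(k, x). insert_at m x k) (Sigma (chain_idx d) (insert_range d m)) (chain_idx (Suc d))"
proof (rule bij_betw_byWitness[where f' = "\<lambda>k. (k \<circ> skip_idx m, k m)"])
  show "\<forall>a\<in>Sigma (chain_idx d) (insert_range d m).
      (\<lambda>k. (k \<circ> skip_idx m, k m)) ((\<lambda>(k, x). insert_at m x k) a) = a"
    by (auto simp: skip_idx_def insert_at_def fun_eq_iff)
  show "\<forall>k\<in>chain_idx (Suc d). (\<lambda>(k, x). insert_at m x k) ((\<lambda>k. (k \<circ> skip_idx m, k m)) k) = k"
    by (auto simp: skip_idx_def insert_at_def fun_eq_iff)
  show "(\<lambda>(k, x). insert_at m x k) ` Sigma (chain_idx d) (insert_range d m) \<subseteq> chain_idx (Suc d)"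
    using insert_at_in_chain_idx[OF assms] by auto
  show "(\<lambda>k. (k \<circ> skip_idx m, k m)) ` chain_idx (Suc d) \<subseteq> Sigma (chain_idx d) (insert_range d m)"
    using skip_in_chain_idx[OF assms] by auto
qed

lemma chain_term_insert_at:
  assumes "m \<le> d"
  shows "chain_term z (Suc d) J h (insert_at m x k)
       = chain_term z d (J \<circ> skip_idx m) (h \<circ> skip_idx m) k * (inv_zprod z (J m) ^ x * h m x)"
proof -
  have "insert_at m x k (skip_idx m j) = k j" for j
    by (simp add: insert_at_def skip_idx_def)
  moreover have "insert_at m x k m = x" by (simp add: insert_at_def)
  ultimately show ?thesis
    unfolding chain_term_def prod.lessThan_Suc_skip_idx[OF assms] by (simp add: mult.commute)
qed

lemma chain_sum_split_slot:
  assumes "m \<le> d" "chain_term z (Suc d) J h summable_on chain_idx (Suc d)"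
  defines "F \<equiv> \<lambda>k. chain_term z d (J \<circ> skip_idx m) (h \<circ> skip_idx m) k
                   * (\<Sum>\<^sub>\<infinity>x\<in>insert_range d m k. inv_zprod z (J m) ^ x * h m x)"
  shows "F summable_on chain_idx d" "chain_sum z (Suc d) J h = (\<Sum>\<^sub>\<infinity>k\<in>chain_idx d. F k)"
proof -
  note bij = bij_betw_insert_at[OF assms(1)]
  have summ: "(\<lambda>(k, x). chain_term z (Suc d) J h (insert_at m x k)) summable_on Sigma (chain_idx d) (insert_range d m)"
    using summable_on_reindex_bij_betw[OF bij, of "chain_term z (Suc d) J h"] assms(2)
    by (simp add: case_prod_unfold)
  have F: "F k = (\<Sum>\<^sub>\<infinity>x\<in>insert_range d m k. chain_term z (Suc d) J h (insert_at m x k))" for k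
    unfolding F_def by (simp add: chain_term_insert_at[OF assms(1)] infsum_cmult_right')
  show "F summable_on chain_idx d"
    unfolding F by (rule summable_on_Sigma_banach[OF summ, simplified])
  have "chain_sum z (Suc d) J h
      = (\<Sum>\<^sub>\<infinity>(k, x)\<in>Sigma (chain_idx d) (insert_range d m). chain_term z (Suc d) J h (insert_at m x k))"
    unfolding chain_sum_def using infsum_reindex_bij_betw[OF bij, of "chain_term z (Suc d) J h"]
    by (simp add: case_prod_unfold)
  also have "\<dots> = (\<Sum>\<^sub>\<infinity>k\<in>chain_idx d. F k)"
    unfolding F using infsum_Sigma_banach[OF summ] by simp
  finally show "chain_sum z (Suc d) J h = (\<Sum>\<^sub>\<infinity>k\<in>chain_idx d. F k)" .
qed

lemma infsum_insert_range:
  fixes g :: "nat \<Rightarrow> complex"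
  assumes "m \<le> d" "k \<in> chain_idx d" "g summable_on UNIV"
  shows "(\<Sum>\<^sub>\<infinity>x\<in>insert_range d m k. g x)
       = (\<Sum>\<^sub>\<infinity>x\<in>{insert_min d m k..}. g x) - (if 0 < m then \<Sum>\<^sub>\<infinity>x\<in>{Suc (k (m - 1))..}. g x else 0)"
proof (cases "0 < m")
  case True
  define lo hi where "lo = insert_min d m k" and "hi = k (m - 1)"
  have "lo \<le> hi"
    using True assms chain_idx_antimono[OF assms(2), of "m - 1" m]
    by (auto simp: lo_def hi_def insert_min_def chain_idx_def)
  then have "{lo..} = {lo..hi} \<union> {Suc hi..}" by auto
  then have "infsum g {lo..} = infsum g {lo..hi} + infsum g {Suc hi..}"
    using summable_on_subset_banach[OF assms(3)] by (simp add: infsum_Un_disjoint)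
  moreover have "insert_range d m k = {lo..hi}"
    using True by (auto simp: insert_range_def lo_def hi_def)
  ultimately show ?thesis using True by (simp add: lo_def hi_def)
next
  case False
  then show ?thesis by (simp add: insert_range_def atLeast_def)
qed

section \<open>Disjoint blocks and the polylogarithm span\<close>

definition disjoint_blocks :: "nat \<Rightarrow> nat \<Rightarrow> (nat \<Rightarrow> nat set) \<Rightarrow> bool" where
  "disjoint_blocks p d J \<longleftrightarrow> d \<le> p \<and> (\<forall>j<d. J j \<subseteq> {..<p} \<and> J j \<noteq> {})
     \<and> (\<forall>i<d. \<forall>j<d. i \<noteq> j \<longrightarrow> J i \<inter> J j = {})"

lemma disjoint_blocks_norm_less_1:
  "disjoint_blocks p d J \<Longrightarrow> \<forall>j<p. norm (z j) > 1 \<Longrightarrow> j < d \<Longrightarrow> norm (inv_zprod z (J j)) < 1"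
  by (rule norm_inv_zprod_less_1) (auto simp: disjoint_blocks_def)

lemma summable_on_chain_term_ratfuns:
  assumes "disjoint_blocks p d J" "\<forall>j<p. norm (z j) > 1" "\<forall>j<d. h j \<in> ratfuns_upto p z (\<omega> j)"
  shows "chain_term z d J h summable_on chain_idx d"
proof (rule summable_on_chain_term)
  show "\<forall>j<d. norm (inv_zprod z (J j)) < 1"
    using assms(1,2) by (blast intro: disjoint_blocks_norm_less_1)
  show "\<forall>j<d. poly_bounded (h j)"
    using assms(3) by (blast intro: ratfuns_poly_bounded)
qed

lemma disjoint_blocks_skip:
  assumes "disjoint_blocks p (Suc d) J" "m \<le> d"
  shows "disjoint_blocks p d (J \<circ> skip_idx m)"
  using assms unfolding disjoint_blocks_def skip_idx_def
  by (smt (verit) Suc_leD Suc_less_eq Suc_mono comp_apply less_Suc_eq not_less_eq)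

lemma disjoint_blocks_merge:
  assumes "disjoint_blocks p (Suc d) J" "m \<le> d" "j0 < d"
  shows "disjoint_blocks p d ((J \<circ> skip_idx m)(j0 := J (skip_idx m j0) \<union> J m))"
proof -
  have s: "skip_idx m j < Suc d" "skip_idx m j \<noteq> m" if "j < d" for j
    using that by (auto simp: skip_idx_def)
  have s_inj: "skip_idx m i \<noteq> skip_idx m j" if "i \<noteq> j" for i j
    using that by (auto simp: skip_idx_def)
  have J: "\<forall>j<Suc d. J j \<subseteq> {..<p} \<and> J j \<noteq> {}" "\<forall>i<Suc d. \<forall>j<Suc d. i \<noteq> j \<longrightarrow> J i \<inter> J j = {}"
    using assms(1) unfolding disjoint_blocks_def by auto
  have m: "m < Suc d" using assms(2) by simp
  show ?thesis unfolding disjoint_blocks_def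
  proof (intro conjI allI impI)
    show "d \<le> p" using assms(1) by (simp add: disjoint_blocks_def)
  next
    fix j assume "j < d"
    then show "((J \<circ> skip_idx m)(j0 := J (skip_idx m j0) \<union> J m)) j \<subseteq> {..<p}"
      and "((J \<circ> skip_idx m)(j0 := J (skip_idx m j0) \<union> J m)) j \<noteq> {}"
      using J(1) s assms(3) m by auto
  next
    fix i j assume ij: "i < d" "j < d" "i \<noteq> j"
    have "J (skip_idx m i) \<inter> J (skip_idx m j) = {}"
      using J(2) s ij s_inj by blast
    moreover have "J (skip_idx m i) \<inter> J m = {}" "J (skip_idx m j) \<inter> J m = {}"
      using J(2) s ij m by metis+
    ultimately show "((J \<circ> skip_idx m)(j0 := J (skip_idx m j0) \<union> J m)) i
        \<inter> ((J \<circ> skip_idx m)(j0 := J (skip_idx m j0) \<union> J m)) j = {}"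
      using ij by auto
  qed
qed

lemma chain_term_merge:
  assumes "j0 < d" "finite (J j0)" "finite Jn" "J j0 \<inter> Jn = {}"
  shows "chain_term z d J h k * (inv_zprod z Jn ^ k j0 * \<phi> (k j0))
       = chain_term z d (J(j0 := J j0 \<union> Jn)) (h(j0 := \<lambda>K. h j0 K * \<phi> K)) k"
proof -
  have j0: "j0 \<in> {..<d}" using assms by simp
  have "(\<Prod>j\<in>{..<d} - {j0}. inv_zprod z (J j) ^ k j * h j (k j))
      = (\<Prod>j\<in>{..<d} - {j0}. inv_zprod z ((J(j0 := J j0 \<union> Jn)) j) ^ k j
          * (h(j0 := \<lambda>K. h j0 K * \<phi> K)) j (k j))"
    by (rule prod.cong) auto
  then show ?thesis
    unfolding chain_term_def using assms
    by (simp add: prod.remove[OF _ j0] inv_zprod_Un power_mult_distrib mult_ac)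
qed

type_synonym La_data = "complex \<times> nat \<times> (nat \<Rightarrow> int) \<times> (nat \<Rightarrow> nat set)"

definition La_admissible :: "nat \<Rightarrow> int \<Rightarrow> (nat \<Rightarrow> complex) \<Rightarrow> La_data \<Rightarrow> bool" where
  "La_admissible p W z = (\<lambda>(a, q, s, J). a \<in> coeff_alg p z \<and> q \<le> p \<and> (\<forall>i<q. s i \<ge> 1)
     \<and> (\<Sum>i<q. s i) \<le> W \<and> (\<forall>i<q. J i \<subseteq> {..<p} \<and> J i \<noteq> {}))"

definition La_eval :: "(nat \<Rightarrow> complex) \<Rightarrow> La_data \<Rightarrow> complex" where
  "La_eval z = (\<lambda>(a, q, s, J). a * La q s (\<lambda>i. inv_zprod z (J i)))"

definition La_span :: "nat \<Rightarrow> int \<Rightarrow> (nat \<Rightarrow> complex) \<Rightarrow> complex set" where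
  "La_span p W z = {(\<Sum>t\<leftarrow>ts. La_eval z t) | ts. list_all (La_admissible p W z) ts}"

lemma La_span_0: "0 \<in> La_span p W z"
  unfolding La_span_def by (intro CollectI exI[of _ "[]"]) simp

lemma La_span_add:
  assumes "x \<in> La_span p W z" "y \<in> La_span p W z"
  shows "x + y \<in> La_span p W z"
proof -
  obtain xs ys where "list_all (La_admissible p W z) xs" "x = (\<Sum>t\<leftarrow>xs. La_eval z t)"
    "list_all (La_admissible p W z) ys" "y = (\<Sum>t\<leftarrow>ys. La_eval z t)"
    using assms unfolding La_span_def by blast
  then show ?thesis unfolding La_span_def by (intro CollectI exI[of _ "xs @ ys"]) simp
qed

lemma La_span_smult:
  assumes "x \<in> La_span p W z" "r \<in> coeff_alg p z"
  shows "r * x \<in> La_span p W z"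
proof -
  obtain ts where ts: "list_all (La_admissible p W z) ts" "x = (\<Sum>t\<leftarrow>ts. La_eval z t)"
    using assms(1) unfolding La_span_def by blast
  define scale :: "La_data \<Rightarrow> La_data" where "scale = (\<lambda>(a, q, s, J). (r * a, q, s, J))"
  have "La_admissible p W z (scale t)" if "La_admissible p W z t" for t
    using that assms(2) coeff_alg.mult
    by (auto simp: scale_def La_admissible_def split: prod.splits)
  moreover have "La_eval z (scale t) = r * La_eval z t" for t
    by (auto simp: scale_def La_eval_def split: prod.splits)
  ultimately show ?thesis
    unfolding La_span_def using ts
    by (intro CollectI exI[of _ "map scale ts"]) (simp_all add: list_all_iff sum_list_const_mult o_def)
qed

lemma La_span_sum: "(\<And>i. i \<in> I \<Longrightarrow> f i \<in> La_span p W z) \<Longrightarrow> sum f I \<in> La_span p W z"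
  by (induction I rule: infinite_finite_induct) (auto intro: La_span_0 La_span_add)

lemma La_in_La_span:
  assumes "q \<le> p" "\<forall>i<q. s i \<ge> 1" "(\<Sum>i<q. s i) \<le> W" "\<forall>i<q. J i \<subseteq> {..<p} \<and> J i \<noteq> {}"
  shows "La q s (\<lambda>i. inv_zprod z (J i)) \<in> La_span p W z"
  unfolding La_span_def using assms coeff_alg_1
  by (intro CollectI exI[of _ "[(1, q, s, J)]"]) (simp add: La_admissible_def La_eval_def)

lemma La_span_explicit:
  assumes "y \<in> La_span p W z"
  shows "\<exists>(N::nat) q s J (a :: nat \<Rightarrow> complex).
           (\<forall>t<N. q t \<le> p \<and> (\<forall>i<q t. s t i \<ge> 1) \<and> (\<Sum>i<q t. s t i) \<le> W
              \<and> (\<forall>i<q t. J t i \<subseteq> {..<p} \<and> J t i \<noteq> {}) \<and> a t \<in> coeff_alg p z)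
         \<and> y = (\<Sum>t<N. a t * La (q t) (s t) (\<lambda>i. 1 / (\<Prod>j\<in>J t i. z j)))"
proof -
  obtain ts where ts: "list_all (La_admissible p W z) ts" "y = (\<Sum>t\<leftarrow>ts. La_eval z t)"
    using assms unfolding La_span_def by blast
  define a where "a t = fst (ts ! t)" for t
  define q where "q t = fst (snd (ts ! t))" for t
  define s where "s t = fst (snd (snd (ts ! t)))" for t
  define J where "J t = snd (snd (snd (ts ! t)))" for t
  have t: "ts ! t = (a t, q t, s t, J t)" for t by (simp add: a_def q_def s_def J_def)
  have "\<forall>t<length ts. La_admissible p W z (a t, q t, s t, J t)"
    using ts(1) by (simp add: list_all_length flip: t)
  moreover have "y = (\<Sum>t<length ts. a t * La (q t) (s t) (\<lambda>i. 1 / (\<Prod>j\<in>J t i. z j)))"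
    unfolding ts(2) sum_list_sum_nth
    by (simp add: atLeast0LessThan t La_eval_def inv_zprod_def)
  ultimately show ?thesis
    by (intro exI[of _ "length ts"] exI[of _ q] exI[of _ s] exI[of _ J] exI[of _ a])
      (simp add: La_admissible_def)
qed

definition chain_sums_in_span :: "nat \<Rightarrow> int \<Rightarrow> (nat \<Rightarrow> complex) \<Rightarrow> nat \<Rightarrow> bool" where
  "chain_sums_in_span p W z d \<longleftrightarrow> (\<forall>J h \<omega>. disjoint_blocks p d J
     \<longrightarrow> (\<forall>j<d. h j \<in> ratfuns_upto p z (\<omega> j)) \<longrightarrow> (\<Sum>j<d. int (\<omega> j)) \<le> W
     \<longrightarrow> chain_sum z d J h \<in> La_span p W z)"

section \<open>Peeling one slot\<close>

lemma summable_on_sum_finite: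
  fixes f :: "'i \<Rightarrow> 'a \<Rightarrow> 'b :: {topological_comm_monoid_add, t2_space}"
  assumes "\<And>i. i \<in> I \<Longrightarrow> f i summable_on A"
  shows "(\<lambda>x. \<Sum>i\<in>I. f i x) summable_on A"
  using assms by (induction I rule: infinite_finite_induct) (auto intro: summable_on_add)

lemma infsum_sum_finite:
  fixes f :: "'i \<Rightarrow> 'a \<Rightarrow> 'b :: {topological_comm_monoid_add, t2_space}"
  assumes "\<And>i. i \<in> I \<Longrightarrow> f i summable_on A"
  shows "(\<Sum>\<^sub>\<infinity>x\<in>A. \<Sum>i\<in>I. f i x) = (\<Sum>i\<in>I. \<Sum>\<^sub>\<infinity>x\<in>A. f i x)"
  using assms
proof (induction I rule: infinite_finite_induct)
  case (insert i I)
  then show ?case by (simp add: infsum_add summable_on_sum_finite)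
qed auto

lemma infsum_atLeast_eq_add_Suc:
  fixes g :: "nat \<Rightarrow> complex"
  assumes "g summable_on UNIV"
  shows "(\<Sum>\<^sub>\<infinity>x\<in>{L..}. g x) = g L + (\<Sum>\<^sub>\<infinity>x\<in>{Suc L..}. g x)"
proof -
  have "{L..} = insert L {Suc L..}" by auto
  then show ?thesis
    using summable_on_subset_banach[OF assms] by (simp add: infsum_insert)
qed

text \<open>Shifting the summation index by one and expanding (x - 1)^e binomially.\<close>
lemma power_monom_tail_recurrence:
  fixes u :: complex
  assumes "norm u < 1"
  defines "T \<equiv> \<lambda>l L. \<Sum>\<^sub>\<infinity>x\<in>{L..}. u ^ x * of_nat x ^ l"
  shows "(1 - u) * T e L
       = u ^ L * of_nat L ^ e - (\<Sum>l<e. of_nat (e choose l) * (-1) ^ (e - l) * T l (Suc L))"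
proof -
  define c where "c l = (of_nat (e choose l) * (-1) ^ (e - l) :: complex)" for l
  have summ: "(\<lambda>x. u ^ x * of_nat x ^ l) summable_on A" for l A
    by (rule summable_on_power_mult[OF assms(1) poly_bounded_monom])
  have "u * T e L = (\<Sum>\<^sub>\<infinity>x\<in>{L..}. u ^ Suc x * of_nat x ^ e)"
    unfolding T_def by (subst infsum_cmult_right'[symmetric]) (simp add: mult.assoc)
  also have "\<dots> = (\<Sum>\<^sub>\<infinity>y\<in>Suc ` {L..}. u ^ y * of_nat (y - 1) ^ e)"
    by (subst infsum_reindex) (auto simp: o_def)
  also have "Suc ` {L..} = {Suc L..}"
    using image_add_atLeast[of 1 L] by (simp add: plus_1_eq_Suc)
  also have "(\<Sum>\<^sub>\<infinity>y\<in>{Suc L..}. u ^ y * of_nat (y - 1) ^ e)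
      = (\<Sum>\<^sub>\<infinity>y\<in>{Suc L..}. \<Sum>l\<le>e. c l * (u ^ y * of_nat y ^ l))"
  proof (rule infsum_cong)
    fix y assume "y \<in> {Suc L..}"
    then have "(of_nat (y - 1) :: complex) = of_nat y + (-1)" by (auto simp: of_nat_diff)
    then have "(of_nat (y - 1) :: complex) ^ e = (\<Sum>l\<le>e. of_nat (e choose l) * of_nat y ^ l * (-1) ^ (e - l))"
      using binomial_ring[of "of_nat y :: complex" "-1" e] by (simp only:)
    then show "u ^ y * of_nat (y - 1) ^ e = (\<Sum>l\<le>e. c l * (u ^ y * of_nat y ^ l))"
      by (simp add: c_def sum_distrib_left mult_ac)
  qed
  also have "\<dots> = (\<Sum>l\<le>e. c l * T l (Suc L))"
    unfolding T_def
    by (subst infsum_sum_finite) (auto intro!: summable_on_cmult_right summ simp: infsum_cmult_right')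
  also have "\<dots> = T e (Suc L) + (\<Sum>l<e. c l * T l (Suc L))"
    by (simp add: c_def lessThan_Suc_atMost[symmetric])
  finally have "u * T e L = T e (Suc L) + (\<Sum>l<e. c l * T l (Suc L))" .
  moreover have "T e L = u ^ L * of_nat L ^ e + T e (Suc L)"
    unfolding T_def by (rule infsum_atLeast_eq_add_Suc[OF summ])
  ultimately show ?thesis by (simp add: c_def algebra_simps)
qed

lemma power_monom_tail:
  fixes u :: complex
  assumes "norm u < 1" "inverse (1 - u) \<in> coeff_alg p z"
  shows "\<exists>Q\<in>ratfuns_upto p z 0. \<forall>L. (\<Sum>\<^sub>\<infinity>x\<in>{L..}. u ^ x * of_nat x ^ e) = u ^ L * Q L"
proof (induction e rule: less_induct)
  case (less e)
  define T where "T l L = (\<Sum>\<^sub>\<infinity>x\<in>{L..}. u ^ x * of_nat x ^ l)" for l L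
  have "\<forall>l. \<exists>Q. l < e \<longrightarrow> Q \<in> ratfuns_upto p z 0 \<and> (\<forall>L. T l L = u ^ L * Q L)"
    using less unfolding T_def by blast
  then obtain Q where Q: "\<And>l. l < e \<Longrightarrow> Q l \<in> ratfuns_upto p z 0" "\<And>l L. l < e \<Longrightarrow> T l L = u ^ L * Q l L"
    by (metis choice)
  define c where "c l = (of_nat (e choose l) * (-1) ^ (e - l) :: complex)" for l
  define Qe where "Qe K = inverse (1 - u) * (of_nat K ^ e - (\<Sum>l<e. c l * (Q l K - of_nat K ^ l)))" for K
  have "T e L = u ^ L * Qe L" for L
  proof -
    have "T l L = u ^ L * of_nat L ^ l + T l (Suc L)" for l
      unfolding T_def by (rule infsum_atLeast_eq_add_Suc[OF summable_on_power_mult[OF assms(1) poly_bounded_monom]])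
    then have "T l (Suc L) = u ^ L * (Q l L - of_nat L ^ l)" if "l < e" for l
      using Q(2)[OF that, of L] by (metis add_diff_cancel_left' right_diff_distrib)
    then have "(\<Sum>l<e. c l * T l (Suc L)) = u ^ L * (\<Sum>l<e. c l * (Q l L - of_nat L ^ l))"
      by (simp add: sum_distrib_left mult_ac)
    moreover have "(1 - u) * T e L = u ^ L * of_nat L ^ e - (\<Sum>l<e. c l * T l (Suc L))"
      using power_monom_tail_recurrence[OF assms(1), of e L] unfolding T_def c_def by simp
    ultimately have "(1 - u) * T e L = u ^ L * (of_nat L ^ e - (\<Sum>l<e. c l * (Q l L - of_nat L ^ l)))"
      by (simp add: right_diff_distrib)
    moreover have "1 - u \<noteq> 0" using assms(1) by auto
    ultimately show ?thesis unfolding Qe_def by (simp add: field_simps)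
  qed
  moreover have "Qe \<in> ratfuns_upto p z 0"
  proof -
    have "c l \<in> coeff_alg p z" for l
      unfolding c_def by (intro coeff_alg.mult coeff_alg_of_nat coeff_alg_power coeff_alg_neg coeff_alg_1)
    then have "(\<lambda>K. c l * (Q l K - of_nat K ^ l)) \<in> ratfuns_upto p z 0" if "l < e" for l
      by (rule ratfuns.smult[OF _ ratfuns_diff[OF Q(1)[OF that] ratfuns.monom]])
    then show ?thesis
      unfolding Qe_def by (rule ratfuns.smult[OF assms(2) ratfuns_diff[OF ratfuns.monom ratfuns_sum]]) simp
  qed
  ultimately show ?case unfolding T_def by blast
qed

lemma pfrac_tail_shift:
  fixes u :: complex
  assumes "norm u < 1" "u \<noteq> 0"
  shows "(\<Sum>\<^sub>\<infinity>x\<in>{L..}. u ^ x * pfrac i a x)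
       = inverse u ^ i * ((\<Sum>\<^sub>\<infinity>y\<in>{L..}. u ^ y * pfrac 0 a y) - u ^ L * (\<Sum>r<i. u ^ r * pfrac r a L))"
proof -
  have "(\<Sum>\<^sub>\<infinity>x\<in>{L..}. u ^ x * pfrac i a x) = (\<Sum>\<^sub>\<infinity>x\<in>{L..}. inverse u ^ i * (u ^ (i + x) * pfrac 0 a (i + x)))"
    by (rule infsum_cong) (use assms(2) in \<open>simp add: pfrac_def power_add field_simps\<close>)
  also have "\<dots> = inverse u ^ i * (\<Sum>\<^sub>\<infinity>x\<in>{L..}. u ^ (i + x) * pfrac 0 a (i + x))"
    by (rule infsum_cmult_right')
  also have "(\<Sum>\<^sub>\<infinity>x\<in>{L..}. u ^ (i + x) * pfrac 0 a (i + x)) = (\<Sum>\<^sub>\<infinity>y\<in>{i + L..}. u ^ y * pfrac 0 a y)"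
    using infsum_reindex[of "plus i" "{L..}" "\<lambda>y. u ^ y * pfrac 0 a y"] by (simp add: o_def)
  also have "\<dots> = (\<Sum>\<^sub>\<infinity>y\<in>{L..}. u ^ y * pfrac 0 a y) - (\<Sum>y\<in>{L..<i + L}. u ^ y * pfrac 0 a y)"
  proof -
    have "{L..} = {L..<i + L} \<union> {i + L..}" by auto
    moreover have "(\<Sum>\<^sub>\<infinity>y\<in>{L..<i + L} \<union> {i + L..}. u ^ y * pfrac 0 a y)
        = (\<Sum>\<^sub>\<infinity>y\<in>{L..<i + L}. u ^ y * pfrac 0 a y) + (\<Sum>\<^sub>\<infinity>y\<in>{i + L..}. u ^ y * pfrac 0 a y)"
      by (rule infsum_Un_disjoint) (auto intro: summable_on_power_mult[OF assms(1) poly_bounded_pfrac])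
    ultimately show ?thesis by simp
  qed
  also have "(\<Sum>y\<in>{L..<i + L}. u ^ y * pfrac 0 a y) = u ^ L * (\<Sum>r<i. u ^ r * pfrac r a L)"
  proof -
    have "(\<Sum>y\<in>{L..<i + L}. u ^ y * pfrac 0 a y) = (\<Sum>r<i. u ^ (L + r) * pfrac 0 a (L + r))"
      by (rule sum.reindex_bij_witness[of _ "\<lambda>r. L + r" "\<lambda>y. y - L"]) auto
    then show ?thesis by (simp add: sum_distrib_left power_add pfrac_def mult_ac add_ac)
  qed
  finally show ?thesis .
qed

locale slot_peeling =
  fixes p :: nat and W :: int and z :: "nat \<Rightarrow> complex" and d m :: nat
    and J :: "nat \<Rightarrow> nat set" and h :: "nat \<Rightarrow> nat \<Rightarrow> complex" and \<omega> :: "nat \<Rightarrow> nat"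
  assumes z_gt_1: "\<forall>j<p. norm (z j) > 1"
    and m_le_d: "m \<le> d"
    and blocks: "disjoint_blocks p (Suc d) J"
    and h_in: "\<forall>j<Suc d. h j \<in> ratfuns_upto p z (\<omega> j)"
    and weight: "(\<Sum>j<Suc d. int (\<omega> j)) \<le> W"
    and depth_d: "chain_sums_in_span p W z d"
begin

abbreviation u :: complex where
  "u \<equiv> inv_zprod z (J m)"

abbreviation rest :: "(nat \<Rightarrow> nat) \<Rightarrow> complex" where
  "rest \<equiv> chain_term z d (J \<circ> skip_idx m) (h \<circ> skip_idx m)"

lemma block_m: "J m \<subseteq> {..<p}" "J m \<noteq> {}" "finite (J m)"
  using blocks m_le_d finite_subset[of "J m" "{..<p}"] unfolding disjoint_blocks_def by auto

lemma
  shows norm_u_less_1: "norm u < 1" and u_neq_0: "u \<noteq> 0"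
    and inverse_u_in_coeff_alg: "inverse u \<in> coeff_alg p z"
    and inverse_one_minus_u_in_coeff_alg: "inverse (1 - u) \<in> coeff_alg p z"
proof -
  have "norm (\<Prod>j\<in>J m. z j) > 1"
    using block_m z_gt_1 by (intro norm_prod_gt_1) auto
  then have nz: "(\<Prod>j\<in>J m. z j) \<noteq> 0" by auto
  then show "u \<noteq> 0" by (simp add: inv_zprod_def)
  show "norm u < 1" by (rule norm_inv_zprod_less_1[OF block_m(1,2) z_gt_1])
  show "inverse u \<in> coeff_alg p z" by (rule inverse_inv_zprod_in_coeff_alg[OF block_m(1)])
  show "inverse (1 - u) \<in> coeff_alg p z"
    by (rule inverse_one_minus_inv_zprod_in_coeff_alg[OF block_m(1,2) nz])
qed

lemma u_in_coeff_alg: "u \<in> coeff_alg p z"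
  by (rule inv_zprod_in_coeff_alg[OF block_m(1)])

lemma rest_in_span:
  "rest summable_on chain_idx d" "chain_sum z d (J \<circ> skip_idx m) (h \<circ> skip_idx m) \<in> La_span p W z"
proof -
  have blocks': "disjoint_blocks p d (J \<circ> skip_idx m)"
    by (rule disjoint_blocks_skip[OF blocks m_le_d])
  have h': "\<forall>j<d. (h \<circ> skip_idx m) j \<in> ratfuns_upto p z ((\<omega> \<circ> skip_idx m) j)"
    using h_in by (auto simp: skip_idx_def)
  have "(\<Sum>j<d. int ((\<omega> \<circ> skip_idx m) j)) \<le> (\<Sum>j<Suc d. int (\<omega> j))"
    using sum.lessThan_Suc_skip_idx[OF m_le_d, of "\<lambda>j. int (\<omega> j)"] by (simp add: o_def)
  then show "chain_sum z d (J \<circ> skip_idx m) (h \<circ> skip_idx m) \<in> La_span p W z"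
    using depth_d blocks' h' weight unfolding chain_sums_in_span_def by fastforce
  show "rest summable_on chain_idx d"
    by (rule summable_on_chain_term_ratfuns[OF blocks' z_gt_1 h'])
qed

text \<open>A boundary term of the peeled slot m is absorbed by the neighbouring slot j0: the blocks
  J m and J j0 are united and the pole orders add up, so the total weight is unchanged.\<close>
lemma merged_slot_in_span:
  assumes "j0 < d" "\<phi> \<in> ratfuns_upto p z (\<omega> m)"
  shows "(\<lambda>k. rest k * (u ^ k j0 * \<phi> (k j0))) summable_on chain_idx d"
    and "(\<Sum>\<^sub>\<infinity>k\<in>chain_idx d. rest k * (u ^ k j0 * \<phi> (k j0))) \<in> La_span p W z"
proof -
  define j1 where "j1 = skip_idx m j0"
  define J' where "J' = (J \<circ> skip_idx m)(j0 := J j1 \<union> J m)"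
  define h' where "h' = (h \<circ> skip_idx m)(j0 := \<lambda>K. h j1 K * \<phi> K)"
  define \<omega>' where "\<omega>' = (\<omega> \<circ> skip_idx m)(j0 := \<omega> j1 + \<omega> m)"
  have j1: "j1 < Suc d" "j1 \<noteq> m" using assms(1) by (auto simp: j1_def skip_idx_def)
  have "finite (J j1)" "J j1 \<inter> J m = {}"
    using blocks j1 m_le_d finite_subset[of "J j1" "{..<p}"] unfolding disjoint_blocks_def by auto
  then have eq: "rest k * (u ^ k j0 * \<phi> (k j0)) = chain_term z d J' h' k" for k
    using chain_term_merge[of j0 d "J \<circ> skip_idx m" "J m"] assms(1) block_m
    unfolding J'_def h'_def j1_def by simp
  have blocks': "disjoint_blocks p d J'"
    unfolding J'_def j1_def by (rule disjoint_blocks_merge[OF blocks m_le_d assms(1)])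
  have h': "\<forall>j<d. h' j \<in> ratfuns_upto p z (\<omega>' j)"
    using h_in j1 ratfuns_upto_mult[OF _ assms(2)] unfolding h'_def \<omega>'_def
    by (auto simp: skip_idx_def)
  have "int (\<omega>' j) = int (\<omega> (skip_idx m j)) + (if j = j0 then int (\<omega> m) else 0)" for j
    by (simp add: \<omega>'_def j1_def)
  then have "(\<Sum>j<d. int (\<omega>' j)) = (\<Sum>j<Suc d. int (\<omega> j))"
    using assms(1) sum.lessThan_Suc_skip_idx[OF m_le_d, of "\<lambda>j. int (\<omega> j)"]
    by (simp add: sum.distrib o_def)
  then have "(\<Sum>j<d. int (\<omega>' j)) \<le> W" using weight by simp
  then have "chain_sum z d J' h' \<in> La_span p W z"
    using depth_d blocks' h' unfolding chain_sums_in_span_def by blast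
  then show "(\<Sum>\<^sub>\<infinity>k\<in>chain_idx d. rest k * (u ^ k j0 * \<phi> (k j0))) \<in> La_span p W z"
    by (simp add: eq chain_sum_def)
  show "(\<lambda>k. rest k * (u ^ k j0 * \<phi> (k j0))) summable_on chain_idx d"
    using summable_on_chain_term_ratfuns[OF blocks' z_gt_1 h'] by (simp add: eq)
qed

lemma lower_boundary_in_span:
  assumes "\<phi> \<in> ratfuns_upto p z (\<omega> m)"
  defines "B \<equiv> \<lambda>k. rest k * (u ^ insert_min d m k * \<phi> (insert_min d m k))"
  shows "B summable_on chain_idx d" "infsum B (chain_idx d) \<in> La_span p W z"
proof -
  have "B summable_on chain_idx d \<and> infsum B (chain_idx d) \<in> La_span p W z"
  proof (cases "m < d")
    case True
    then show ?thesis
      using merged_slot_in_span[OF True assms(1)] by (simp add: B_def insert_min_def)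
  next
    case False
    have c: "u * \<phi> 1 \<in> coeff_alg p z"
      by (intro coeff_alg.mult u_in_coeff_alg ratfuns_in_coeff_alg[OF assms(1)]) simp
    have "B = (\<lambda>k. (u * \<phi> 1) * rest k)"
      using False by (simp add: B_def insert_min_def fun_eq_iff)
    then show ?thesis
      using summable_on_cmult_right[OF rest_in_span(1)] La_span_smult[OF rest_in_span(2) c]
      by (simp add: infsum_cmult_right' chain_sum_def)
  qed
  then show "B summable_on chain_idx d" "infsum B (chain_idx d) \<in> La_span p W z" by auto
qed

lemma upper_boundary_in_span:
  assumes "\<phi> \<in> ratfuns_upto p z (\<omega> m)"
  defines "C \<equiv> \<lambda>k. if 0 < m then rest k * (u ^ k (m - 1) * \<phi> (k (m - 1))) else 0"
  shows "C summable_on chain_idx d" "infsum C (chain_idx d) \<in> La_span p W z"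
proof -
  have "C summable_on chain_idx d \<and> infsum C (chain_idx d) \<in> La_span p W z"
  proof (cases "0 < m")
    case True
    then have "C = (\<lambda>k. rest k * (u ^ k (m - 1) * \<phi> (k (m - 1))))" by (simp add: C_def)
    then show ?thesis using merged_slot_in_span[of "m - 1", OF _ assms(1)] True m_le_d by simp
  next
    case False
    then have "C = (\<lambda>_. 0)" by (simp add: C_def)
    then show ?thesis by (simp add: La_span_0)
  qed
  then show "C summable_on chain_idx d" "infsum C (chain_idx d) \<in> La_span p W z" by auto
qed


text \<open>Summing over the m-th index first (chain_sum_split_slot), an identity between the inner
  sums over insert_range d m k transfers to the chain sums; the boundary terms at both ends of
  the range are absorbed by the neighbouring slots.\<close>
lemma chain_sum_in_span_by_peeling:
  assumes \<beta>: "\<beta> \<in> ratfuns_upto p z (\<omega> m)" and \<gamma>: "\<gamma> \<in> ratfuns_upto p z (\<omega> m)"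
    and g: "g \<in> ratfuns_upto p z (\<omega> m)"
    and \<alpha>: "\<alpha> * chain_sum z (Suc d) J (h(m := g)) \<in> La_span p W z"
    and slot: "\<And>k. k \<in> chain_idx d \<Longrightarrow>
      (\<Sum>\<^sub>\<infinity>x\<in>insert_range d m k. u ^ x * h m x)
      = \<alpha> * (\<Sum>\<^sub>\<infinity>x\<in>insert_range d m k. u ^ x * g x)
        + u ^ insert_min d m k * \<beta> (insert_min d m k)
        + (if 0 < m then u ^ k (m - 1) * \<gamma> (k (m - 1)) else 0)"
  shows "chain_sum z (Suc d) J h \<in> La_span p W z"
proof -
  define B where "B = (\<lambda>k. rest k * (u ^ insert_min d m k * \<beta> (insert_min d m k)))"
  define C where "C = (\<lambda>k. if 0 < m then rest k * (u ^ k (m - 1) * \<gamma> (k (m - 1))) else 0)"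
  define G where "G = (\<lambda>k. rest k * (\<Sum>\<^sub>\<infinity>x\<in>insert_range d m k. u ^ x * g x))"
  have hg: "\<forall>j<Suc d. (h(m := g)) j \<in> ratfuns_upto p z (\<omega> j)" using h_in g by auto
  have skip: "(h(m := g)) \<circ> skip_idx m = h \<circ> skip_idx m" by (auto simp: skip_idx_def)
  have G: "G summable_on chain_idx d" "chain_sum z (Suc d) J (h(m := g)) = infsum G (chain_idx d)"
    using chain_sum_split_slot[OF m_le_d summable_on_chain_term_ratfuns[OF blocks z_gt_1 hg]]
    unfolding skip fun_upd_same G_def by blast+
  have B: "B summable_on chain_idx d" "infsum B (chain_idx d) \<in> La_span p W z"
    unfolding B_def by (rule lower_boundary_in_span[OF \<beta>])+
  have C: "C summable_on chain_idx d" "infsum C (chain_idx d) \<in> La_span p W z"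
    unfolding C_def by (rule upper_boundary_in_span[OF \<gamma>])+
  have "chain_sum z (Suc d) J h
      = (\<Sum>\<^sub>\<infinity>k\<in>chain_idx d. rest k * (\<Sum>\<^sub>\<infinity>x\<in>insert_range d m k. u ^ x * h m x))"
    by (rule chain_sum_split_slot(2)[OF m_le_d summable_on_chain_term_ratfuns[OF blocks z_gt_1 h_in]])
  also have "\<dots> = (\<Sum>\<^sub>\<infinity>k\<in>chain_idx d. \<alpha> * G k + B k + C k)"
  proof (rule infsum_cong)
    fix k assume "k \<in> chain_idx d"
    then show "rest k * (\<Sum>\<^sub>\<infinity>x\<in>insert_range d m k. u ^ x * h m x) = \<alpha> * G k + B k + C k"
      unfolding slot[OF \<open>k \<in> chain_idx d\<close>] G_def B_def C_def by (simp add: algebra_simps)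
  qed
  also have "\<dots> = \<alpha> * chain_sum z (Suc d) J (h(m := g)) + infsum B (chain_idx d) + infsum C (chain_idx d)"
    using G B C by (simp add: infsum_add summable_on_add summable_on_cmult_right infsum_cmult_right')
  finally show ?thesis using \<alpha> B C by (simp add: La_span_add)
qed

lemma chain_sum_in_span_monom_slot:
  assumes hm: "h m = (\<lambda>K. of_nat K ^ e)"
  shows "chain_sum z (Suc d) J h \<in> La_span p W z"
proof -
  obtain Q where Q: "Q \<in> ratfuns_upto p z 0" "\<And>L. (\<Sum>\<^sub>\<infinity>x\<in>{L..}. u ^ x * of_nat x ^ e) = u ^ L * Q L"
    using power_monom_tail[OF norm_u_less_1 inverse_one_minus_u_in_coeff_alg] by blast
  define \<gamma> where "\<gamma> K = of_nat K ^ e - Q K" for K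
  have Q': "Q \<in> ratfuns_upto p z (\<omega> m)" by (rule ratfuns_upto_mono[OF Q(1)]) simp
  have \<gamma>: "\<gamma> \<in> ratfuns_upto p z (\<omega> m)"
    unfolding \<gamma>_def by (rule ratfuns_upto_mono[OF ratfuns_diff[OF ratfuns.monom Q(1)]]) simp
  show ?thesis
  proof (rule chain_sum_in_span_by_peeling[OF Q' \<gamma>, where g = "h m" and \<alpha> = 0])
    show "h m \<in> ratfuns_upto p z (\<omega> m)" using h_in m_le_d by simp
    show "0 * chain_sum z (Suc d) J (h(m := h m)) \<in> La_span p W z" by (simp add: La_span_0)
  next
    fix k assume k: "k \<in> chain_idx d"
    define lo hi where "lo = insert_min d m k" and "hi = k (m - 1)"
    have summ: "(\<lambda>x. u ^ x * of_nat x ^ e) summable_on UNIV"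
      by (rule summable_on_power_mult[OF norm_u_less_1 poly_bounded_monom])
    have lower: "(\<Sum>\<^sub>\<infinity>x\<in>{lo..}. u ^ x * of_nat x ^ e) = u ^ lo * Q lo" by (rule Q(2))
    have upper: "(\<Sum>\<^sub>\<infinity>x\<in>{Suc hi..}. u ^ x * of_nat x ^ e) = u ^ hi * (Q hi - of_nat hi ^ e)"
      using infsum_atLeast_eq_add_Suc[OF summ, of hi] Q(2)[of hi]
      by (metis add_diff_cancel_left' right_diff_distrib)
    show "(\<Sum>\<^sub>\<infinity>x\<in>insert_range d m k. u ^ x * h m x)
        = 0 * (\<Sum>\<^sub>\<infinity>x\<in>insert_range d m k. u ^ x * h m x) + u ^ insert_min d m k * Q (insert_min d m k)
          + (if 0 < m then u ^ k (m - 1) * \<gamma> (k (m - 1)) else 0)"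
      unfolding hm infsum_insert_range[OF m_le_d k summ] lo_def[symmetric] hi_def[symmetric] lower upper
      by (simp add: \<gamma>_def algebra_simps)
  qed
qed

lemma chain_sum_in_span_pfrac_slot:
  assumes hm: "h m = pfrac i a" and a: "a \<le> \<omega> m"
    and shifted: "chain_sum z (Suc d) J (h(m := pfrac 0 a)) \<in> La_span p W z"
  shows "chain_sum z (Suc d) J h \<in> La_span p W z"
proof -
  define \<alpha> where "\<alpha> = inverse u ^ i"
  define \<phi>1 where "\<phi>1 K = (\<Sum>r<i. u ^ r * pfrac r a K)" for K
  define \<phi>2 where "\<phi>2 K = u * (\<Sum>r<i. u ^ r * pfrac (Suc r) a K)" for K
  have \<alpha>: "\<alpha> \<in> coeff_alg p z" unfolding \<alpha>_def by (rule coeff_alg_power[OF inverse_u_in_coeff_alg])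
  have \<phi>1: "\<phi>1 \<in> ratfuns_upto p z (\<omega> m)" unfolding \<phi>1_def
    by (intro ratfuns_sum ratfuns.smult[OF coeff_alg_power[OF u_in_coeff_alg]] ratfuns.pfrac) (simp add: a)
  have \<phi>2: "\<phi>2 \<in> ratfuns_upto p z (\<omega> m)" unfolding \<phi>2_def
    by (intro ratfuns.smult[OF u_in_coeff_alg] ratfuns_sum
        ratfuns.smult[OF coeff_alg_power[OF u_in_coeff_alg]] ratfuns.pfrac) (simp add: a)
  have tail: "(\<Sum>\<^sub>\<infinity>x\<in>{L..}. u ^ x * pfrac i a x)
      = \<alpha> * ((\<Sum>\<^sub>\<infinity>y\<in>{L..}. u ^ y * pfrac 0 a y) - u ^ L * \<phi>1 L)" for L
    unfolding \<alpha>_def \<phi>1_def by (rule pfrac_tail_shift[OF norm_u_less_1 u_neq_0])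
  have shift: "u ^ Suc L * \<phi>1 (Suc L) = u ^ L * \<phi>2 L" for L
    unfolding \<phi>1_def \<phi>2_def by (simp add: pfrac_def sum_distrib_left mult_ac add_ac)
  show ?thesis
  proof (rule chain_sum_in_span_by_peeling[where \<alpha> = \<alpha> and g = "pfrac 0 a"])
    show "(\<lambda>K. - (\<alpha> * \<phi>1 K)) \<in> ratfuns_upto p z (\<omega> m)"
      by (intro ratfuns_neg ratfuns.smult[OF \<alpha> \<phi>1])
    show "(\<lambda>K. \<alpha> * \<phi>2 K) \<in> ratfuns_upto p z (\<omega> m)"
      by (intro ratfuns.smult[OF \<alpha> \<phi>2])
    show "pfrac 0 a \<in> ratfuns_upto p z (\<omega> m)" by (rule ratfuns.pfrac) (simp add: a)
    show "\<alpha> * chain_sum z (Suc d) J (h(m := pfrac 0 a)) \<in> La_span p W z"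
      using La_span_smult[OF shifted \<alpha>] .
  next
    fix k assume k: "k \<in> chain_idx d"
    define lo hi where "lo = insert_min d m k" and "hi = k (m - 1)"
    have summ: "(\<lambda>x. u ^ x * pfrac j a x) summable_on UNIV" for j
      by (rule summable_on_power_mult[OF norm_u_less_1 poly_bounded_pfrac])
    have upper: "(\<Sum>\<^sub>\<infinity>x\<in>{Suc hi..}. u ^ x * pfrac i a x)
        = \<alpha> * ((\<Sum>\<^sub>\<infinity>y\<in>{Suc hi..}. u ^ y * pfrac 0 a y) - u ^ hi * \<phi>2 hi)"
      using tail[of "Suc hi"] shift[of hi] by simp
    show "(\<Sum>\<^sub>\<infinity>x\<in>insert_range d m k. u ^ x * h m x)
        = \<alpha> * (\<Sum>\<^sub>\<infinity>x\<in>insert_range d m k. u ^ x * pfrac 0 a x)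
          + u ^ insert_min d m k * - (\<alpha> * \<phi>1 (insert_min d m k))
          + (if 0 < m then u ^ k (m - 1) * (\<alpha> * \<phi>2 (k (m - 1))) else 0)"
      unfolding hm infsum_insert_range[OF m_le_d k summ] lo_def[symmetric] hi_def[symmetric] tail[of lo] upper
      by (simp add: algebra_simps)
  qed
qed

end


section \<open>Reduction to atoms\<close>

lemma chain_sum_cong: "\<forall>j<d. h j = h' j \<Longrightarrow> chain_sum z d J h = chain_sum z d J h'"
  unfolding chain_sum_def chain_term_def by (intro infsum_cong prod.cong) auto

lemma chain_term_fun_upd:
  assumes "n < d"
  shows "chain_term z d J (h(n := f)) k
       = inv_zprod z (J n) ^ k n * f (k n) * (\<Prod>j\<in>{..<d} - {n}. inv_zprod z (J j) ^ k j * h j (k j))"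
proof -
  have "(\<Prod>j\<in>{..<d} - {n}. inv_zprod z (J j) ^ k j * (h(n := f)) j (k j))
      = (\<Prod>j\<in>{..<d} - {n}. inv_zprod z (J j) ^ k j * h j (k j))"
    by (rule prod.cong) auto
  then show ?thesis unfolding chain_term_def using assms by (simp add: prod.remove)
qed

lemma chain_sum_fun_upd_add:
  assumes "n < d" "chain_term z d J (h(n := f)) summable_on chain_idx d"
    "chain_term z d J (h(n := g)) summable_on chain_idx d"
  shows "chain_sum z d J (h(n := \<lambda>K. f K + g K)) = chain_sum z d J (h(n := f)) + chain_sum z d J (h(n := g))"
  unfolding chain_sum_def
  by (subst infsum_add[symmetric])
    (auto intro!: assms(2,3) infsum_cong simp: chain_term_fun_upd[OF assms(1)] algebra_simps)

lemma chain_sum_fun_upd_cmult: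
  "n < d \<Longrightarrow> chain_sum z d J (h(n := \<lambda>K. r * f K)) = r * chain_sum z d J (h(n := f))"
  unfolding chain_sum_def
  by (subst infsum_cmult_right'[symmetric]) (auto intro!: infsum_cong simp: chain_term_fun_upd algebra_simps)

lemma chain_sum_fun_upd_cong:
  assumes "n < d" "\<forall>K\<ge>1. g K = f K"
  shows "chain_sum z d J (h(n := g)) = chain_sum z d J (h(n := f))"
  unfolding chain_sum_def
proof (rule infsum_cong)
  fix k assume "k \<in> chain_idx d"
  then have "k n \<ge> 1" using assms(1) by (auto simp: chain_idx_def)
  then show "chain_term z d J (h(n := g)) k = chain_term z d J (h(n := f)) k"
    using assms(2) by (simp add: chain_term_fun_upd[OF assms(1)])
qed

datatype atom = Monom nat | PFrac nat nat

fun atom_fun :: "atom \<Rightarrow> nat \<Rightarrow> complex" where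
  "atom_fun (Monom e) = (\<lambda>K. of_nat K ^ e)"
| "atom_fun (PFrac i a) = pfrac i a"

fun atom_admissible :: "atom \<Rightarrow> nat \<Rightarrow> bool" where
  "atom_admissible (Monom e) w \<longleftrightarrow> True"
| "atom_admissible (PFrac i a) w \<longleftrightarrow> 1 \<le> a \<and> a \<le> w"

fun is_La_atom :: "atom \<Rightarrow> bool" where
  "is_La_atom (Monom e) \<longleftrightarrow> False"
| "is_La_atom (PFrac i a) \<longleftrightarrow> i = 0"

lemma atom_fun_in_ratfuns: "atom_admissible b w \<Longrightarrow> atom_fun b \<in> ratfuns_upto p z w"
  by (cases b) (auto intro: ratfuns.monom ratfuns.pfrac)

lemma chain_sum_La_atoms_in_span:
  assumes "disjoint_blocks p d J" "\<forall>j<d. 1 \<le> a j \<and> a j \<le> \<omega> j" "(\<Sum>j<d. int (\<omega> j)) \<le> W"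
  shows "chain_sum z d J (\<lambda>j. pfrac 0 (a j)) \<in> La_span p W z"
proof -
  have "chain_sum z d J (\<lambda>j. pfrac 0 (a j)) = La d (\<lambda>j. int (a j)) (\<lambda>j. inv_zprod z (J j))"
    unfolding chain_sum_def chain_term_def La_def
    by (intro infsum_cong prod.cong) (auto simp: pfrac_def power_int_of_nat)
  moreover have "(\<Sum>j<d. int (a j)) \<le> (\<Sum>j<d. int (\<omega> j))"
    using assms(2) by (intro sum_mono) auto
  ultimately show ?thesis
    using assms by (auto simp: disjoint_blocks_def intro!: La_in_La_span)
qed

lemma card_non_La_atoms_fun_upd_less:
  fixes b :: "nat \<Rightarrow> atom"
  assumes "m < d" "\<not> is_La_atom (b m)"
  shows "card {j. j < d \<and> \<not> is_La_atom ((b(m := PFrac 0 a)) j)} < card {j. j < d \<and> \<not> is_La_atom (b j)}"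
proof -
  have "{j. j < d \<and> \<not> is_La_atom ((b(m := PFrac 0 a)) j)} = {j. j < d \<and> \<not> is_La_atom (b j)} - {m}"
    by auto
  moreover have "card ({j. j < d \<and> \<not> is_La_atom (b j)} - {m}) < card {j. j < d \<and> \<not> is_La_atom (b j)}"
    using assms by (intro card_Diff1_less) auto
  ultimately show ?thesis by simp
qed

text \<open>Induction on the number of slots that do not yet carry a factor 1 / K^a: each is
  removed by peeling, which either lowers the depth or replaces pfrac i a by pfrac 0 a.\<close>
lemma chain_sum_atoms_in_span:
  assumes z: "\<forall>j<p. norm (z j) > 1" and lower_depths: "\<forall>d'<d. chain_sums_in_span p W z d'"
    and "disjoint_blocks p d J" "\<forall>j<d. atom_admissible (b j) (\<omega> j)" "(\<Sum>j<d. int (\<omega> j)) \<le> W"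
  shows "chain_sum z d J (\<lambda>j. atom_fun (b j)) \<in> La_span p W z"
  using assms(3-5)
proof (induction "card {j. j < d \<and> \<not> is_La_atom (b j)}" arbitrary: b rule: less_induct)
  case less
  show ?case
  proof (cases "\<exists>m<d. \<not> is_La_atom (b m)")
    case False
    define a where "a j = (case b j of PFrac i a \<Rightarrow> a | Monom e \<Rightarrow> 0)" for j
    have b: "b j = PFrac 0 (a j)" if "j < d" for j
      using False that by (cases "b j") (auto simp: a_def)
    then have "chain_sum z d J (\<lambda>j. atom_fun (b j)) = chain_sum z d J (\<lambda>j. pfrac 0 (a j))"
      by (intro chain_sum_cong) simp
    moreover have "\<forall>j<d. 1 \<le> a j \<and> a j \<le> \<omega> j" using less.prems(2) b by fastforce
    ultimately show ?thesis using chain_sum_La_atoms_in_span[OF less.prems(1) _ less.prems(3)] by simp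
  next
    case True
    then obtain m where m: "m < d" "\<not> is_La_atom (b m)" by blast
    then obtain d' where d: "d = Suc d'" by (cases d) auto
    have "slot_peeling p W z d' m J (\<lambda>j. atom_fun (b j)) \<omega>"
      unfolding slot_peeling_def
    proof (intro conjI)
      show "\<forall>j<Suc d'. atom_fun (b j) \<in> ratfuns_upto p z (\<omega> j)"
        using less.prems(2) d by (auto intro: atom_fun_in_ratfuns)
    qed (use z m d less.prems(1,3) lower_depths in auto)
    then interpret slot_peeling p W z d' m J "\<lambda>j. atom_fun (b j)" \<omega> .
    show ?thesis
    proof (cases "b m")
      case (Monom e)
      then show ?thesis using chain_sum_in_span_monom_slot d by simp
    next
      case (PFrac i a)
      define b' where "b' = b(m := PFrac 0 a)"
      have fewer: "card {j. j < d \<and> \<not> is_La_atom (b' j)} < card {j. j < d \<and> \<not> is_La_atom (b j)}"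
        unfolding b'_def using m by (rule card_non_La_atoms_fun_upd_less)
      have "\<forall>j<d. atom_admissible (b' j) (\<omega> j)"
        using less.prems(2) PFrac m by (auto simp: b'_def)
      then have "chain_sum z d J (\<lambda>j. atom_fun (b' j)) \<in> La_span p W z"
        by (rule less.hyps[OF fewer less.prems(1) _ less.prems(3)])
      moreover have "(\<lambda>j. atom_fun (b' j)) = (\<lambda>j. atom_fun (b j))(m := pfrac 0 a)"
        by (auto simp: b'_def)
      moreover have "a \<le> \<omega> m" using less.prems(2) PFrac m by auto
      ultimately show ?thesis
        using chain_sum_in_span_pfrac_slot[of i a] PFrac d by simp
    qed
  qed
qed

lemma chain_sum_slot_in_span:
  assumes "n < d" "disjoint_blocks p d J" "\<forall>j<p. norm (z j) > 1"
    and h: "\<forall>j<d. h j \<in> ratfuns_upto p z (\<omega> j)"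
    and atoms: "\<And>b. atom_admissible b (\<omega> n) \<Longrightarrow> chain_sum z d J (h(n := atom_fun b)) \<in> La_span p W z"
    and "f \<in> ratfuns_upto p z (\<omega> n)"
  shows "chain_sum z d J (h(n := f)) \<in> La_span p W z"
  using assms(6)
proof (induction rule: ratfuns.induct)
  case (monom e)
  show ?case using atoms[of "Monom e"] by (simp only: atom_fun.simps atom_admissible.simps)
next
  case (pfrac i a)
  show ?case
  proof (cases "a = 0")
    case True
    then have "pfrac i a = atom_fun (Monom 0)" by (simp add: fun_eq_iff)
    then show ?thesis using atoms[of "Monom 0"] by (simp only: atom_admissible.simps)
  next
    case False
    then have "atom_admissible (PFrac i a) (\<omega> n)" using pfrac by simp
    then show ?thesis using atoms[of "PFrac i a"] by (simp only: atom_fun.simps)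
  qed
next
  case (add f g)
  have "chain_term z d J (h(n := f')) summable_on chain_idx d" if "f' \<in> ratfuns_upto p z (\<omega> n)" for f'
    using h that by (intro summable_on_chain_term_ratfuns[OF assms(2,3)]) auto
  then show ?case
    using La_span_add[OF add.IH] chain_sum_fun_upd_add[OF assms(1)] add.hyps by (simp only:)
next
  case (smult r f)
  then show ?case using La_span_smult[OF smult.IH smult.hyps(1)] chain_sum_fun_upd_cmult[OF assms(1)]
    by (simp only:)
next
  case (cong f g)
  then show ?case using chain_sum_fun_upd_cong[OF assms(1)] by (simp only:)
qed

text \<open>Chain sums are multilinear in the slot functions, so it suffices to treat atoms; the
  slots are made general one at a time.\<close>
lemma chain_sums_in_span_of_atoms:
  assumes z: "\<forall>j<p. norm (z j) > 1"
    and atoms: "\<And>J b \<omega>. disjoint_blocks p d J \<Longrightarrow> \<forall>j<d. atom_admissible (b j) (\<omega> j)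
      \<Longrightarrow> (\<Sum>j<d. int (\<omega> j)) \<le> W \<Longrightarrow> chain_sum z d J (\<lambda>j. atom_fun (b j)) \<in> La_span p W z"
  shows "chain_sums_in_span p W z d"
proof -
  have claim: "chain_sum z d J h \<in> La_span p W z"
    if "n \<le> d" "disjoint_blocks p d J" "\<forall>j<d. h j \<in> ratfuns_upto p z (\<omega> j)"
      "(\<Sum>j<d. int (\<omega> j)) \<le> W" "\<forall>j. n \<le> j \<and> j < d \<longrightarrow> (\<exists>b. atom_admissible b (\<omega> j) \<and> h j = atom_fun b)"
    for n J h \<omega>
    using that
  proof (induction n arbitrary: h)
    case 0
    then have "\<forall>j. \<exists>b. j < d \<longrightarrow> atom_admissible b (\<omega> j) \<and> h j = atom_fun b" by auto
    then obtain b where b: "\<forall>j<d. atom_admissible (b j) (\<omega> j) \<and> h j = atom_fun (b j)"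
      by (metis choice)
    then have "chain_sum z d J h = chain_sum z d J (\<lambda>j. atom_fun (b j))"
      by (intro chain_sum_cong) simp
    then show ?case using atoms[OF 0(2) _ 0(4)] b by simp
  next
    case (Suc n)
    have "chain_sum z d J (h(n := h n)) \<in> La_span p W z"
    proof (rule chain_sum_slot_in_span[OF _ Suc.prems(2) z Suc.prems(3)])
      show "n < d" "h n \<in> ratfuns_upto p z (\<omega> n)" using Suc.prems(1,3) by auto
      fix b0 assume b0: "atom_admissible b0 (\<omega> n)"
      show "chain_sum z d J (h(n := atom_fun b0)) \<in> La_span p W z"
      proof (rule Suc.IH)
        show "\<forall>j<d. (h(n := atom_fun b0)) j \<in> ratfuns_upto p z (\<omega> j)"
          using Suc.prems(3) atom_fun_in_ratfuns[OF b0] by auto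
        show "\<forall>j. n \<le> j \<and> j < d \<longrightarrow> (\<exists>b. atom_admissible b (\<omega> j) \<and> (h(n := atom_fun b0)) j = atom_fun b)"
        proof (intro allI impI)
          fix j assume "n \<le> j \<and> j < d"
          then consider "j = n" | "Suc n \<le> j \<and> j < d" by linarith
          then show "\<exists>b. atom_admissible b (\<omega> j) \<and> (h(n := atom_fun b0)) j = atom_fun b"
            using b0 Suc.prems(5) by cases auto
        qed
      qed (use Suc.prems in auto)
    qed
    then show ?case by simp
  qed
  show ?thesis
    unfolding chain_sums_in_span_def
  proof (intro allI impI)
    fix J h \<omega>
    assume "disjoint_blocks p d J" "\<forall>j<d. h j \<in> ratfuns_upto p z (\<omega> j)" "(\<Sum>j<d. int (\<omega> j)) \<le> W"
    then show "chain_sum z d J h \<in> La_span p W z" by (intro claim[of d]) auto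
  qed
qed

lemma chain_sums_in_span_all: "\<forall>j<p. norm (z j) > 1 \<Longrightarrow> chain_sums_in_span p W z d"
proof (induction d rule: less_induct)
  case (less d)
  have "\<forall>d'<d. chain_sums_in_span p W z d'" using less by blast
  then show ?case
    using chain_sum_atoms_in_span[OF less.prems] by (intro chain_sums_in_span_of_atoms[OF less.prems])
qed

lemma series_summand_eq_chain_terms:
  "poly_eval p c (\<lambda>j. of_nat (k j)) / (\<Prod>j<p. pochhammer (of_nat (k j)) (n j + 1) ^ A j)
     * (\<Prod>j<p. z j powi (- int (k j)))
   = (\<Sum>e | c e \<noteq> 0. of_rat (c e) * chain_term z p (\<lambda>j. {j})
       (\<lambda>j K. of_nat K ^ e j / pochhammer (of_nat K) (Suc (n j)) ^ A j) k)"
proof -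
  have fac: "(\<Prod>j<p. of_nat (k j) ^ e j) / (\<Prod>j<p. pochhammer (of_nat (k j)) (n j + 1) ^ A j)
      * (\<Prod>j<p. z j powi (- int (k j)))
      = chain_term z p (\<lambda>j. {j}) (\<lambda>j K. of_nat K ^ e j / pochhammer (of_nat K) (Suc (n j)) ^ A j) k" for e
    unfolding chain_term_def inv_zprod_def
    by (simp add: prod.distrib prod_inversef[unfolded o_def] power_inverse power_int_minus
        power_one_over power_int_of_nat divide_inverse mult_ac)
  then show ?thesis
    unfolding poly_eval_def by (simp add: sum_divide_distrib sum_distrib_right mult.assoc flip: fac)
qed

text \<open>Only the hypothesis on the norms of the z j is used: for A j = 0 the slot function is a
  monomial, and a coefficient function c of infinite support makes poly_eval vanish.\<close>
theorem mainTheorem2: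
  fixes p :: nat and A n :: "nat \<Rightarrow> nat" and c :: "(nat \<Rightarrow> nat) \<Rightarrow> rat"
    and z :: "nat \<Rightarrow> complex"
  assumes "p \<ge> 1"
    and "\<forall>j<p. A j \<ge> 1"
    and "finite {e. c e \<noteq> 0}"
    and "\<forall>j<p. norm (z j) > 1"
  shows "\<exists>(N::nat) (q :: nat \<Rightarrow> nat) (s :: nat \<Rightarrow> nat \<Rightarrow> int) (J :: nat \<Rightarrow> nat \<Rightarrow> nat set)
            (a :: nat \<Rightarrow> complex).
           (\<forall>t<N. q t \<le> p
                \<and> (\<forall>i<q t. s t i \<ge> 1)
                \<and> (\<Sum>i<q t. s t i) \<le> (\<Sum>j<p. int (A j))
                \<and> (\<forall>i<q t. J t i \<subseteq> {..<p} \<and> J t i \<noteq> {})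
                \<and> a t \<in> coeff_alg p z)
         \<and> (\<Sum>\<^sub>\<infinity>k\<in>chain_idx p.
               poly_eval p c (\<lambda>j. of_nat (k j))
               / (\<Prod>j<p. pochhammer (of_nat (k j)) (n j + 1) ^ A j)
               * (\<Prod>j<p. z j powi (- int (k j))))
           = (\<Sum>t<N. a t * La (q t) (s t) (\<lambda>i. 1 / (\<Prod>j\<in>J t i. z j)))"
proof -
  define h where "h e = (\<lambda>j K. of_nat K ^ e j / pochhammer (of_nat K) (Suc (n j)) ^ A j :: complex)"
    for e :: "nat \<Rightarrow> nat"
  have blocks: "disjoint_blocks p p (\<lambda>j. {j})" by (auto simp: disjoint_blocks_def)
  have h: "\<forall>j<p. h e j \<in> ratfuns_upto p z (A j)" for e
    by (simp add: h_def monom_div_pochhammer_in_ratfuns)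
  have "(\<Sum>\<^sub>\<infinity>k\<in>chain_idx p. poly_eval p c (\<lambda>j. of_nat (k j))
          / (\<Prod>j<p. pochhammer (of_nat (k j)) (n j + 1) ^ A j) * (\<Prod>j<p. z j powi (- int (k j))))
      = (\<Sum>\<^sub>\<infinity>k\<in>chain_idx p. \<Sum>e | c e \<noteq> 0. of_rat (c e) * chain_term z p (\<lambda>j. {j}) (h e) k)"
    unfolding h_def by (simp only: series_summand_eq_chain_terms)
  also have "\<dots> = (\<Sum>e | c e \<noteq> 0. of_rat (c e) * chain_sum z p (\<lambda>j. {j}) (h e))"
    unfolding chain_sum_def using summable_on_chain_term_ratfuns[OF blocks assms(4) h]
    by (subst infsum_sum_finite) (auto intro: summable_on_cmult_right simp: infsum_cmult_right')
  also have "\<dots> \<in> La_span p (\<Sum>j<p. int (A j)) z"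
  proof (intro La_span_sum La_span_smult coeff_alg.rat)
    show "chain_sum z p (\<lambda>j. {j}) (h e) \<in> La_span p (\<Sum>j<p. int (A j)) z" for e
      using chain_sums_in_span_all[OF assms(4), of "\<Sum>j<p. int (A j)" p] blocks h
      unfolding chain_sums_in_span_def by blast
  qed
  finally show ?thesis by (rule La_span_explicit)
qed

end
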